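(* Let $T>0$, $\lambda>0$, $\phi,\varrho\ge0$, $G\in\mathcal G$. Then $\sup_{t\le T}\|\Gamma_t^{-1}\|_{\rm op}<\infty$.
   Context: $\mathcal G$: nonnegative definite Volterra kernels $G:[0,T]^2\to[0,\infty)$ ($G(t,s)=0$ for $s\ge t$; $\int\int(G(t,s)+G(s,t))f(s)f(t)\ge0$ for all $f\in L^2([0,T],\mathbb R)$) with $\sup_t\int_0^T|G(t,s)|^2ds+\sup_s\int_0^T|G(t,s)|^2dt<\infty$ and $\lim_{h\to0}\int_0^T|G(t+h,s)-G(t,s)|^2ds=0$ for each $t$. $\tilde G(t,s)=2\varrho\mathbb 1_{\{s<t\}}+G(t,s)$. On $L^2([0,T],\mathbb R)$: $\tilde{\mathbf G}_t$ has kernel $\tilde G(s,u)\mathbb 1_{\{u\ge t\}}$, $\mathbf 1_t$ has kernel $(u,s)\mapsto\mathbb 1_{\{u\ge s\}}\mathbb 1_{\{s\ge t\}}$, $\mathbf D_t=2\lambda{\rm id}+\tilde{\mathbf G}_t+\tilde{\mathbf G}_t^*+2\phi\mathbf 1_t^*\mathbf 1_t$ (invertible). $\Gamma_t^{-1}$ is the operator on $L^2([0,T],\mathbb R^2)$ with block form $\begin{pmatrix}\mathbf D_t^{-1}&-2\phi\mathbf D_t^{-1}\mathbf 1_t^*\\-2\phi\mathbf 1_t\mathbf D_t^{-1}&-2\phi{\rm id}+4\phi^2\mathbf 1_t\mathbf D_t^{-1}\mathbf 1_t^*\end{pmatrix}$. $\|\cdot\|_{\rm op}$ is the operator norm on $L^2([0,T],\mathbb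 R^2)$. *)

theory Defs
  imports "HOL-Analysis.Analysis"
begin

text \<open>Functions on [0,T] are represented as total functions real => real; only their
values on [0,T] matter. All integrals are Lebesgue integrals over [0,T].\<close>

abbreviation LT :: "real \<Rightarrow> real measure" where
  "LT T \<equiv> lebesgue_on {0..T}"

definition L2T :: "real \<Rightarrow> (real \<Rightarrow> real) \<Rightarrow> bool" where
  "L2T T f \<longleftrightarrow> f \<in> borel_measurable (LT T) \<and> integrable (LT T) (\<lambda>s. (f s)\<^sup>2)"

definition kernel_class :: "real \<Rightarrow> (real \<Rightarrow> real \<Rightarrow> real) \<Rightarrow> bool" where
  "kernel_class T G \<longleftrightarrow>
     (\<lambda>(t,s). G t s) \<in> borel_measurable (lebesgue_on ({0..T} \<times> {0..T}))
   \<and> (\<forall>t\<in>{0..T}. \<forall>s\<in>{0..T}. G t s \<ge> 0)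
   \<and> (\<forall>t\<in>{0..T}. \<forall>s\<in>{0..T}. s \<ge> t \<longrightarrow> G t s = 0)
   \<and> (\<forall>f. L2T T f \<longrightarrow>
        (\<integral>t. (\<integral>s. (G t s + G s t) * f s * f t \<partial>LT T) \<partial>LT T) \<ge> 0)
   \<and> (SUP t\<in>{0..T}. \<integral>\<^sup>+ s. ennreal ((G t s)\<^sup>2) \<partial>LT T)
       + (SUP s\<in>{0..T}. \<integral>\<^sup>+ t. ennreal ((G t s)\<^sup>2) \<partial>LT T) < \<infinity>
   \<and> (\<forall>t\<in>{0..T}. ((\<lambda>h. \<integral>\<^sup>+ s. ennreal ((G (t + h) s - G t s)\<^sup>2) \<partial>LT T) \<longlongrightarrow> 0)
                    (at 0 within {h. t + h \<in> {0..T}}))"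

definition Gtilde :: "real \<Rightarrow> (real \<Rightarrow> real \<Rightarrow> real) \<Rightarrow> real \<Rightarrow> real \<Rightarrow> real" where
  "Gtilde \<rho> G t s = 2 * \<rho> * (if s < t then 1 else 0) + G t s"

definition kop :: "real \<Rightarrow> (real \<Rightarrow> real \<Rightarrow> real) \<Rightarrow> (real \<Rightarrow> real) \<Rightarrow> real \<Rightarrow> real" where
  "kop T K f = (\<lambda>s. \<integral>u. K s u * f u \<partial>LT T)"

text \<open>Kernel of tilde G_t: (s,u) |-> tilde G(s,u) 1_{u >= t}; adjoint kernel is transposed.\<close>
definition Gt_ker :: "real \<Rightarrow> (real \<Rightarrow> real \<Rightarrow> real) \<Rightarrow> real \<Rightarrow> real \<Rightarrow> real \<Rightarrow> real" where
  "Gt_ker \<rho> G t s u = Gtilde \<rho> G s u * (if u \<ge> t then 1 else 0)"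

definition one_ker :: "real \<Rightarrow> real \<Rightarrow> real \<Rightarrow> real" where
  "one_ker t u s = (if u \<ge> s \<and> s \<ge> t then 1 else 0)"

definition one_op :: "real \<Rightarrow> real \<Rightarrow> (real \<Rightarrow> real) \<Rightarrow> real \<Rightarrow> real" where
  "one_op T t = kop T (one_ker t)"

definition one_adj :: "real \<Rightarrow> real \<Rightarrow> (real \<Rightarrow> real) \<Rightarrow> real \<Rightarrow> real" where
  "one_adj T t = kop T (\<lambda>s u. one_ker t u s)"

definition D_op :: "real \<Rightarrow> real \<Rightarrow> real \<Rightarrow> real \<Rightarrow> (real \<Rightarrow> real \<Rightarrow> real) \<Rightarrow> real
                     \<Rightarrow> (real \<Rightarrow> real) \<Rightarrow> real \<Rightarrow> real" where
  "D_op T lam \<phi> \<rho> G t f = (\<lambda>s. 2 * lam * f s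
      + kop T (Gt_ker \<rho> G t) f s
      + kop T (\<lambda>s u. Gt_ker \<rho> G t u s) f s
      + 2 * \<phi> * one_adj T t (one_op T t f) s)"

text \<open>Inverse of D_t on L^2([0,T]) (elements of L^2 identified up to a.e. equality).\<close>
definition D_inv :: "real \<Rightarrow> real \<Rightarrow> real \<Rightarrow> real \<Rightarrow> (real \<Rightarrow> real \<Rightarrow> real) \<Rightarrow> real
                     \<Rightarrow> (real \<Rightarrow> real) \<Rightarrow> real \<Rightarrow> real" where
  "D_inv T lam \<phi> \<rho> G t f =
     (SOME g. L2T T g \<and> (AE s in LT T. D_op T lam \<phi> \<rho> G t g s = f s))"

text \<open>Gamma_t^{-1} on L^2([0,T],R^2), given by its block form.\<close>
definition Gamma_inv :: "real \<Rightarrow> real \<Rightarrow> real \<Rightarrow> real \<Rightarrow> (real \<Rightarrow> real \<Rightarrow> real) \<Rightarrow> real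
     \<Rightarrow> (real \<Rightarrow> real) \<times> (real \<Rightarrow> real) \<Rightarrow> (real \<Rightarrow> real) \<times> (real \<Rightarrow> real)" where
  "Gamma_inv T lam \<phi> \<rho> G t fg =
    (let f1 = fst fg; f2 = snd fg; Di = D_inv T lam \<phi> \<rho> G t in
     (\<lambda>s. Di f1 s - 2 * \<phi> * Di (one_adj T t f2) s,
      \<lambda>s. - 2 * \<phi> * one_op T t (Di f1) s
          + (- 2 * \<phi> * f2 s + 4 * \<phi>\<^sup>2 * one_op T t (Di (one_adj T t f2)) s)))"

definition L2norm2 :: "real \<Rightarrow> (real \<Rightarrow> real) \<times> (real \<Rightarrow> real) \<Rightarrow> real" where
  "L2norm2 T fg = sqrt ((\<integral>s. (fst fg s)\<^sup>2 \<partial>LT T) + (\<integral>s. (snd fg s)\<^sup>2 \<partial>LT T))"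

definition op_norm2 :: "real \<Rightarrow> ((real \<Rightarrow> real) \<times> (real \<Rightarrow> real) \<Rightarrow> (real \<Rightarrow> real) \<times> (real \<Rightarrow> real))
                        \<Rightarrow> ennreal" where
  "op_norm2 T A = (SUP fg \<in> {fg. L2T T (fst fg) \<and> L2T T (snd fg) \<and> L2norm2 T fg \<le> 1}.
                      ennreal (L2norm2 T (A fg)))"

end

theory Submission
  imports Defs
begin

(*
  The bound is (1 + 2 phi T)^2 / (2 lam) + 2 phi, uniformly in t.  The blocks of Gamma_t^{-1} are
  built from D_t^{-1}, 1_t and its adjoint, and 1_t, 1_t^* have norm at most T, so everything
  rests on the estimate |D_t^{-1} f| <= |f| / (2 lam).  It follows from the coercivity
  <h, D_t h> >= 2 lam |h|^2: the adjoint part of D_t has the same quadratic form as tilde G_t,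
  which is the quadratic form of the nonnegative definite Volterra kernel tilde G evaluated at
  h cut off below t, and <h, 1_t^* 1_t h> = |1_t h|^2.  Coercivity bounds every solution of
  D_t g = f, and a solution exists by Lax-Milgram, using completeness of L^2.
  Because G is only Lebesgue measurable on the square, the integral operators are handled
  through a Borel kernel with uniformly square integrable rows and columns that agrees with G
  almost everywhere on almost every row and on almost every column.
*)

section \<open>Square integrable functions on \<open>[0, T]\<close>\<close>

definition L2_norm :: "real \<Rightarrow> (real \<Rightarrow> real) \<Rightarrow> real" where
  "L2_norm T f = sqrt (\<integral>s. (f s)\<^sup>2 \<partial>LT T)"

lemma space_LT [simp]: "space (LT T) = {0..T}"
  by (simp add: space_restrict_space)

lemma emeasure_LT: "T \<ge> 0 \<Longrightarrow> emeasure (LT T) {0..T} = ennreal T"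
  by (simp add: emeasure_restrict_space emeasure_lborel_Icc)

lemma finite_measure_LT: "T \<ge> 0 \<Longrightarrow> finite_measure (LT T)"
  by (rule finite_measureI) (simp add: emeasure_LT)

lemma sigma_finite_measure_LT: "T \<ge> 0 \<Longrightarrow> sigma_finite_measure (LT T)"
  using finite_measure_LT finite_measure.axioms(1) by blast

lemma measurable_id_LT [measurable]: "(\<lambda>x. x) \<in> LT T \<rightarrow>\<^sub>M borel"
  by (simp add: measurable_completion measurable_restrict_space1)

lemma AE_LT_in_interval: "AE x in LT T. x \<in> {0..T}"
  by (rule AE_I2) simp

lemma AE_LT_if_AE_lborel: "AE x in lborel. P x \<Longrightarrow> AE x in LT T. P x"
  by (subst AE_restrict_space_iff) (auto dest: AE_completion elim: AE_mp)

lemma borel_measurable_LT_AE_cong: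
  fixes f g :: "real \<Rightarrow> real"
  assumes g: "g \<in> borel_measurable (LT T)" and fg: "AE x in LT T. f x = g x"
  shows "f \<in> borel_measurable (LT T)"
proof -
  have I: "{0..T} \<in> sets lebesgue" by simp
  have "(\<lambda>x. if x \<in> {0..T} then g x else 0) \<in> borel_measurable lebesgue"
    using borel_measurable_if[OF I] g by blast
  moreover have "AE x in lebesgue. (if x \<in> {0..T} then g x else 0) = (if x \<in> {0..T} then f x else 0)"
    using fg by (subst (asm) AE_restrict_space_iff) (auto elim: AE_mp)
  ultimately have "(\<lambda>x. if x \<in> {0..T} then f x else 0) \<in> borel_measurable lebesgue"
    by (rule borel_measurable_AE)
  then show ?thesis using borel_measurable_if[OF I] by blast
qed

lemma integral_LT_AE_cong:
  fixes f g :: "real \<Rightarrow> real"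
  assumes "integrable (LT T) g" "AE x in LT T. f x = g x"
  shows "(\<integral>x. f x \<partial>LT T) = (\<integral>x. g x \<partial>LT T)"
  using assms borel_measurable_LT_AE_cong[OF borel_measurable_integrable[OF assms(1)]]
  by (intro integral_cong_AE) auto

lemma L2T_borel_measurable [measurable_dest]: "L2T T f \<Longrightarrow> f \<in> borel_measurable (LT T)"
  by (simp add: L2T_def)

lemma L2T_integrable_power2: "L2T T f \<Longrightarrow> integrable (LT T) (\<lambda>s. (f s)\<^sup>2)"
  by (simp add: L2T_def)

lemma L2T_integrable: "T \<ge> 0 \<Longrightarrow> L2T T f \<Longrightarrow> integrable (LT T) f"
  using finite_measure.square_integrable_imp_integrable[OF finite_measure_LT] by (auto simp: L2T_def)

lemma L2T_integrable_mult:
  assumes "L2T T f" "L2T T g"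
  shows "integrable (LT T) (\<lambda>s. f s * g s)"
proof (rule Bochner_Integration.integrable_bound)
  show "integrable (LT T) (\<lambda>s. (f s)\<^sup>2 + (g s)\<^sup>2)"
    using assms by (auto simp: L2T_def)
  have "\<bar>f s * g s\<bar> \<le> (f s)\<^sup>2 + (g s)\<^sup>2" for s
  proof -
    have "2 * (\<bar>f s\<bar> * \<bar>g s\<bar>) \<le> (f s)\<^sup>2 + (g s)\<^sup>2"
      using sum_squares_bound[of "\<bar>f s\<bar>" "\<bar>g s\<bar>"] by (simp add: mult.assoc)
    moreover have "0 \<le> \<bar>f s\<bar> * \<bar>g s\<bar>"
      by simp
    ultimately show ?thesis
      unfolding abs_mult by linarith
  qed
  then show "AE s in LT T. norm (f s * g s) \<le> norm ((f s)\<^sup>2 + (g s)\<^sup>2)"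
    by simp
qed (use assms in measurable)

lemma L2T_add: "L2T T f \<Longrightarrow> L2T T g \<Longrightarrow> L2T T (\<lambda>s. f s + g s)"
  using L2T_integrable_mult[of T f g] by (auto simp: L2T_def power2_sum mult.assoc)

lemma L2T_cmult: "L2T T f \<Longrightarrow> L2T T (\<lambda>s. c * f s)"
  unfolding L2T_def power_mult_distrib by auto

lemma L2T_minus: "L2T T f \<Longrightarrow> L2T T (\<lambda>s. - f s)"
  unfolding L2T_def by auto

lemma L2T_diff: "L2T T f \<Longrightarrow> L2T T g \<Longrightarrow> L2T T (\<lambda>s. f s - g s)"
  using L2T_add[of T f "\<lambda>s. - g s"] L2T_minus[of T g] by simp

lemma L2T_zero: "L2T T (\<lambda>s. 0)"
  unfolding L2T_def by auto

lemma L2T_abs: "L2T T f \<Longrightarrow> L2T T (\<lambda>s. \<bar>f s\<bar>)"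
  unfolding L2T_def by auto

lemma L2T_sum: "(\<And>i. i \<in> I \<Longrightarrow> L2T T (f i)) \<Longrightarrow> L2T T (\<lambda>s. \<Sum>i\<in>I. f i s)"
  by (induction I rule: infinite_finite_induct) (auto simp: L2T_zero L2T_add)

lemma L2T_mult_indicator: "L2T T h \<Longrightarrow> L2T T (\<lambda>u. h u * (if t \<le> u then 1 else 0))"
  unfolding L2T_def by (auto intro: Bochner_Integration.integrable_bound simp: power_mult_distrib)

lemma L2_norm_nonneg: "L2_norm T f \<ge> 0"
  by (simp add: L2_norm_def)

lemma power2_L2_norm: "(L2_norm T f)\<^sup>2 = (\<integral>s. (f s)\<^sup>2 \<partial>LT T)"
  by (simp add: L2_norm_def)

lemma L2_norm_cmult: "L2_norm T (\<lambda>s. c * f s) = \<bar>c\<bar> * L2_norm T f"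
  by (simp add: L2_norm_def power_mult_distrib real_sqrt_mult)

lemma L2_norm_abs: "L2_norm T (\<lambda>s. \<bar>f s\<bar>) = L2_norm T f"
  by (simp add: L2_norm_def)

lemma L2_norm_eq_0_imp_AE_zero:
  assumes "L2T T f" "L2_norm T f = 0"
  shows "AE s in LT T. f s = 0"
proof -
  have "(\<integral>s. (f s)\<^sup>2 \<partial>LT T) = 0"
    using assms(2) by (simp add: L2_norm_def)
  then have "AE s in LT T. (f s)\<^sup>2 = 0"
    using assms(1) by (subst (asm) integral_nonneg_eq_0_iff_AE) (auto simp: L2T_def)
  then show ?thesis by auto
qed

lemma abs_integral_mult_le_L2_norm:
  assumes "L2T T f" "L2T T g"
  shows "\<bar>\<integral>s. f s * g s \<partial>LT T\<bar> \<le> L2_norm T f * L2_norm T g"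
proof -
  have [measurable]: "f \<in> borel_measurable (LT T)" "g \<in> borel_measurable (LT T)"
    using assms by (auto simp: L2T_def)
  have nn: "(\<integral>\<^sup>+s. ennreal ((h s)\<^sup>2) \<partial>LT T) = ennreal ((L2_norm T h)\<^sup>2)" if "L2T T h" for h
    using that by (subst nn_integral_eq_integral) (auto simp: L2T_def power2_L2_norm)
  have "(\<integral>\<^sup>+s. ennreal \<bar>f s\<bar> * ennreal \<bar>g s\<bar> \<partial>LT T)\<^sup>2
      \<le> (\<integral>\<^sup>+s. (ennreal \<bar>f s\<bar>)\<^sup>2 \<partial>LT T) * (\<integral>\<^sup>+s. (ennreal \<bar>g s\<bar>)\<^sup>2 \<partial>LT T)"
    by (rule Cauchy_Schwarz_nn_integral) measurable
  also have "\<dots> = ennreal ((L2_norm T f)\<^sup>2) * ennreal ((L2_norm T g)\<^sup>2)"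
    using nn[OF assms(1)] nn[OF assms(2)] by (simp add: ennreal_power)
  also have "\<dots> = ennreal ((L2_norm T f * L2_norm T g)\<^sup>2)"
    by (simp add: ennreal_mult[symmetric] power_mult_distrib)
  finally have "(\<integral>\<^sup>+s. ennreal (\<bar>f s * g s\<bar>) \<partial>LT T)\<^sup>2 \<le> ennreal ((L2_norm T f * L2_norm T g)\<^sup>2)"
    by (simp add: abs_mult ennreal_mult)
  moreover have "(\<integral>\<^sup>+s. ennreal (\<bar>f s * g s\<bar>) \<partial>LT T) = ennreal (\<integral>s. \<bar>f s * g s\<bar> \<partial>LT T)"
    using L2T_integrable_mult[OF assms] by (intro nn_integral_eq_integral) auto
  moreover have "0 \<le> (\<integral>s. \<bar>f s * g s\<bar> \<partial>LT T)"
    by simp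
  ultimately have "(\<integral>s. \<bar>f s * g s\<bar> \<partial>LT T)\<^sup>2 \<le> (L2_norm T f * L2_norm T g)\<^sup>2"
    by (simp add: ennreal_power)
  then have "(\<integral>s. \<bar>f s * g s\<bar> \<partial>LT T) \<le> L2_norm T f * L2_norm T g"
    by (rule power2_le_imp_le) (simp add: L2_norm_nonneg)
  then show ?thesis
    by (rule order_trans[OF integral_abs_bound])
qed

lemma L2_norm_triangle:
  assumes "L2T T f" "L2T T g"
  shows "L2_norm T (\<lambda>s. f s + g s) \<le> L2_norm T f + L2_norm T g"
proof -
  have "(L2_norm T (\<lambda>s. f s + g s))\<^sup>2 = (\<integral>s. (f s)\<^sup>2 + 2 * (f s * g s) + (g s)\<^sup>2 \<partial>LT T)"
    unfolding power2_L2_norm by (rule Bochner_Integration.integral_cong) (auto simp: power2_sum)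
  also have "\<dots> = (L2_norm T f)\<^sup>2 + 2 * (\<integral>s. f s * g s \<partial>LT T) + (L2_norm T g)\<^sup>2"
    using L2T_integrable_mult[OF assms] assms by (simp add: power2_L2_norm L2T_integrable_power2)
  also have "\<dots> \<le> (L2_norm T f)\<^sup>2 + 2 * (L2_norm T f * L2_norm T g) + (L2_norm T g)\<^sup>2"
    using abs_integral_mult_le_L2_norm[OF assms] by simp
  also have "\<dots> = (L2_norm T f + L2_norm T g)\<^sup>2"
    by (simp add: power2_sum)
  finally show ?thesis
    by (rule power2_le_imp_le) (simp add: L2_norm_nonneg)
qed

lemma L2_norm_diff_le:
  assumes "L2T T f" "L2T T g"
  shows "L2_norm T (\<lambda>s. f s - g s) \<le> L2_norm T f + L2_norm T g"
  using L2_norm_triangle[OF assms(1) L2T_minus[OF assms(2)]] L2_norm_cmult[of T "-1" g] by simp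

lemma L2_norm_sum_le:
  "(\<And>i. i \<in> I \<Longrightarrow> L2T T (f i)) \<Longrightarrow> L2_norm T (\<lambda>s. \<Sum>i\<in>I. f i s) \<le> (\<Sum>i\<in>I. L2_norm T (f i))"
proof (induction I rule: infinite_finite_induct)
  case (insert i I)
  have "L2_norm T (\<lambda>s. \<Sum>j\<in>insert i I. f j s) = L2_norm T (\<lambda>s. f i s + (\<Sum>j\<in>I. f j s))"
    using insert.hyps by simp
  also have "\<dots> \<le> L2_norm T (f i) + L2_norm T (\<lambda>s. \<Sum>j\<in>I. f j s)"
    using insert.prems by (intro L2_norm_triangle L2T_sum) auto
  also have "\<dots> \<le> (\<Sum>j\<in>insert i I. L2_norm T (f j))"
    using insert by simp
  finally show ?case .
qed (simp_all add: L2_norm_def)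

lemma L2_norm_le_if_nn_integral_le:
  assumes "f \<in> borel_measurable (LT T)" "C \<ge> 0"
    and "(\<integral>\<^sup>+s. ennreal ((f s)\<^sup>2) \<partial>LT T) \<le> ennreal (C\<^sup>2)"
  shows "L2T T f" "L2_norm T f \<le> C"
proof -
  have "integrable (LT T) (\<lambda>s. (f s)\<^sup>2)"
    using assms by (intro integrableI_nonneg) (auto simp: le_less_trans)
  then show "L2T T f"
    using assms(1) by (simp add: L2T_def)
  have "(\<integral>s. (f s)\<^sup>2 \<partial>LT T) \<le> C\<^sup>2"
    using assms(3) by (intro integral_real_bounded) auto
  then show "L2_norm T f \<le> C"
    using assms(2) by (simp add: L2_norm_def real_le_lsqrt)
qed

lemma L2_norm_le_if_coercive:
  assumes g: "L2T T g" and f: "L2T T f" and c: "c > 0"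
    and coercive: "c * (L2_norm T g)\<^sup>2 \<le> (\<integral>s. g s * f s \<partial>LT T)"
  shows "L2_norm T g \<le> L2_norm T f / c"
proof -
  have "c * L2_norm T g * L2_norm T g \<le> L2_norm T f * L2_norm T g"
    using coercive abs_integral_mult_le_L2_norm[OF g f] by (simp add: power2_eq_square mult_ac)
  then have "c * L2_norm T g \<le> L2_norm T f"
    using L2_norm_nonneg[of T g] L2_norm_nonneg[of T f] c
    by (cases "L2_norm T g = 0") (auto simp: mult_le_cancel_right)
  then show ?thesis
    using c by (simp add: field_simps)
qed

lemma L2norm2_eq: "L2norm2 T (f, g) = sqrt ((L2_norm T f)\<^sup>2 + (L2_norm T g)\<^sup>2)"
  by (simp add: L2norm2_def power2_L2_norm)

lemma L2norm2_le_add: "L2norm2 T (f, g) \<le> L2_norm T f + L2_norm T g"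
  unfolding L2norm2_eq by (rule sqrt_add_le_add_sqrt[THEN order_trans]) (auto simp: L2_norm_nonneg)

lemma L2_norm_le_L2norm2: "L2_norm T f \<le> L2norm2 T (f, g)" "L2_norm T g \<le> L2norm2 T (f, g)"
  unfolding L2norm2_eq by (auto intro!: real_le_rsqrt simp: L2_norm_nonneg)

section \<open>Completeness of \<open>L\<^sup>2\<close> and coercive equations\<close>

lemma summable_if_power2_partial_sums_le:
  fixes x :: "nat \<Rightarrow> real"
  assumes nonneg: "\<And>n. 0 \<le> x n" and bound: "\<And>N. (\<Sum>n<N. x n)\<^sup>2 \<le> h"
  shows "summable x" "(\<Sum>n. x n)\<^sup>2 \<le> h"
proof -
  have "(\<Sum>n<N. x n) \<le> sqrt h" for N
    using bound[of N] sum_nonneg[of "{..<N}" x] nonneg by (simp add: real_le_rsqrt)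
  then show sx: "summable x"
    using nonneg by (intro summableI_nonneg_bounded)
  have "(\<lambda>N. (\<Sum>n<N. x n)\<^sup>2) \<longlonglongrightarrow> (\<Sum>n. x n)\<^sup>2"
    by (intro tendsto_power summable_LIMSEQ sx)
  then show "(\<Sum>n. x n)\<^sup>2 \<le> h"
    by (rule LIMSEQ_le_const2) (use bound in auto)
qed

lemma nn_integral_power2_abs_partial_sums_le:
  assumes "\<And>n. L2T T (a n)"
  shows "(\<integral>\<^sup>+s. ennreal ((\<Sum>n<N. \<bar>a n s\<bar>)\<^sup>2) \<partial>LT T) \<le> ennreal ((\<Sum>n<N. L2_norm T (a n))\<^sup>2)"
proof -
  have L2: "L2T T (\<lambda>s. \<Sum>n<N. \<bar>a n s\<bar>)"
    using assms by (intro L2T_sum L2T_abs)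
  have "L2_norm T (\<lambda>s. \<Sum>n<N. \<bar>a n s\<bar>) \<le> (\<Sum>n<N. L2_norm T (\<lambda>s. \<bar>a n s\<bar>))"
    using assms by (intro L2_norm_sum_le L2T_abs)
  then have "(L2_norm T (\<lambda>s. \<Sum>n<N. \<bar>a n s\<bar>))\<^sup>2 \<le> (\<Sum>n<N. L2_norm T (a n))\<^sup>2"
    by (intro power_mono) (auto simp: L2_norm_abs L2_norm_nonneg)
  moreover have "(\<integral>\<^sup>+s. ennreal ((\<Sum>n<N. \<bar>a n s\<bar>)\<^sup>2) \<partial>LT T) = ennreal ((L2_norm T (\<lambda>s. \<Sum>n<N. \<bar>a n s\<bar>))\<^sup>2)"
    using L2 by (subst nn_integral_eq_integral) (auto simp: L2T_def power2_L2_norm)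
  ultimately show ?thesis
    by (simp add: ennreal_leI)
qed

lemma L2_absolutely_summable_series:
  assumes L2: "\<And>n. L2T T (a n)" and sm: "summable (\<lambda>n. L2_norm T (a n))"
  shows "AE s in LT T. summable (\<lambda>n. \<bar>a n s\<bar>)"
    and "(\<integral>\<^sup>+s. ennreal ((\<Sum>n. \<bar>a n s\<bar>)\<^sup>2) \<partial>LT T) \<le> ennreal ((\<Sum>n. L2_norm T (a n))\<^sup>2)"
proof -
  define C where "C = (\<Sum>n. L2_norm T (a n))"
  define H where "H s = (SUP N. ennreal ((\<Sum>n<N. \<bar>a n s\<bar>)\<^sup>2))" for s
  have [measurable]: "a n \<in> borel_measurable (LT T)" for n
    using L2 by measurable
  have "incseq (\<lambda>N s. ennreal ((\<Sum>n<N. \<bar>a n s\<bar>)\<^sup>2))"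
    by (auto simp: incseq_def le_fun_def intro!: ennreal_leI power_mono sum_mono2 sum_nonneg)
  then have "(\<integral>\<^sup>+s. H s \<partial>LT T) = (SUP N. \<integral>\<^sup>+s. ennreal ((\<Sum>n<N. \<bar>a n s\<bar>)\<^sup>2) \<partial>LT T)"
    unfolding H_def by (intro nn_integral_monotone_convergence_SUP) auto
  also have "\<dots> \<le> ennreal (C\<^sup>2)"
  proof (rule SUP_least)
    fix N
    have "(\<Sum>n<N. L2_norm T (a n)) \<le> C"
      unfolding C_def using sm by (intro sum_le_suminf) (auto simp: L2_norm_nonneg)
    then have "(\<Sum>n<N. L2_norm T (a n))\<^sup>2 \<le> C\<^sup>2"
      by (intro power_mono sum_nonneg) (auto simp: L2_norm_nonneg)
    then show "(\<integral>\<^sup>+s. ennreal ((\<Sum>n<N. \<bar>a n s\<bar>)\<^sup>2) \<partial>LT T) \<le> ennreal (C\<^sup>2)"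
      using nn_integral_power2_abs_partial_sums_le[of T a N] L2 order_trans ennreal_leI by blast
  qed
  finally have int_H: "(\<integral>\<^sup>+s. H s \<partial>LT T) \<le> ennreal (C\<^sup>2)" .
  then have "AE s in LT T. H s \<noteq> \<infinity>"
    by (intro nn_integral_PInf_AE) (auto simp: H_def top_unique)
  then have AE_H: "AE s in LT T. summable (\<lambda>n. \<bar>a n s\<bar>) \<and> ennreal ((\<Sum>n. \<bar>a n s\<bar>)\<^sup>2) \<le> H s"
  proof eventually_elim
    case (elim s)
    then obtain h where h: "H s = ennreal h" "h \<ge> 0"
      by (cases "H s") auto
    have "(\<Sum>n<N. \<bar>a n s\<bar>)\<^sup>2 \<le> h" for N
      using SUP_upper[of N UNIV "\<lambda>N. ennreal ((\<Sum>n<N. \<bar>a n s\<bar>)\<^sup>2)"] h by (simp add: H_def)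
    from summable_if_power2_partial_sums_le[OF _ this] show ?case
      using h by (simp add: ennreal_leI)
  qed
  then show "AE s in LT T. summable (\<lambda>n. \<bar>a n s\<bar>)"
    by auto
  have "(\<integral>\<^sup>+s. ennreal ((\<Sum>n. \<bar>a n s\<bar>)\<^sup>2) \<partial>LT T) \<le> (\<integral>\<^sup>+s. H s \<partial>LT T)"
    using AE_H by (intro nn_integral_mono_AE) auto
  with int_H show "(\<integral>\<^sup>+s. ennreal ((\<Sum>n. \<bar>a n s\<bar>)\<^sup>2) \<partial>LT T) \<le> ennreal ((\<Sum>n. L2_norm T (a n))\<^sup>2)"
    by (simp add: C_def)
qed

lemma suminf_shift_le_geometric:
  fixes x :: "nat \<Rightarrow> real"
  assumes "\<And>n. 0 \<le> x n" "\<And>n. x n \<le> q ^ n * M" "0 \<le> q" "q < 1"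
  shows "summable (\<lambda>n. x (n + N))" "(\<Sum>n. x (n + N)) \<le> q ^ N * M / (1 - q)"
proof -
  have geom: "summable (\<lambda>n. q ^ (n + N) * M)"
    using assms(3,4) by (intro summable_mult2 summable_ignore_initial_segment summable_geometric) auto
  show x: "summable (\<lambda>n. x (n + N))"
    by (rule summable_comparison_test[OF _ geom]) (use assms(1,2) in auto)
  have "(\<Sum>n. x (n + N)) \<le> (\<Sum>n. q ^ (n + N) * M)"
    by (intro suminf_le x geom assms(2))
  also have "\<dots> = (\<Sum>n. q ^ n) * (q ^ N * M)"
    using assms(3,4) by (subst suminf_mult2) (auto simp: power_add mult_ac)
  also have "\<dots> = q ^ N * M / (1 - q)"
    using assms(3,4) by (simp add: suminf_geometric)
  finally show "(\<Sum>n. x (n + N)) \<le> q ^ N * M / (1 - q)" .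
qed

lemma L2_geometric_series_tail:
  assumes L2: "\<And>n. L2T T (a n)" and bound: "\<And>n. L2_norm T (a n) \<le> q ^ n * M"
    and q: "0 \<le> q" "q < 1"
  shows "L2T T (\<lambda>s. (\<Sum>n. a n s) - (\<Sum>n<N. a n s))"
    and "L2_norm T (\<lambda>s. (\<Sum>n. a n s) - (\<Sum>n<N. a n s)) \<le> q ^ N * M / (1 - q)"
proof -
  have [measurable]: "a n \<in> borel_measurable (LT T)" for n
    using L2 by measurable
  have M: "M \<ge> 0"
    using bound[of 0] L2_norm_nonneg[of T "a 0"] by simp
  note tail = suminf_shift_le_geometric[OF L2_norm_nonneg bound q, of N]
  have "AE s in LT T. summable (\<lambda>n. \<bar>a (n + N) s\<bar>)"
    using L2_absolutely_summable_series(1)[of T "\<lambda>n. a (n + N)"] L2 tail(1) by simp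
  then have "AE s in LT T. ennreal (((\<Sum>n. a n s) - (\<Sum>n<N. a n s))\<^sup>2) \<le> ennreal ((\<Sum>n. \<bar>a (n + N) s\<bar>)\<^sup>2)"
  proof eventually_elim
    case (elim s)
    then have "summable (\<lambda>n. a n s)"
      by (subst summable_iff_shift[symmetric, of _ N]) (rule summable_rabs_cancel)
    then have "(\<Sum>n. a n s) - (\<Sum>n<N. a n s) = (\<Sum>n. a (n + N) s)"
      using suminf_minus_initial_segment[of "\<lambda>n. a n s" N] by simp
    moreover have "\<bar>\<Sum>n. a (n + N) s\<bar> \<le> (\<Sum>n. \<bar>a (n + N) s\<bar>)"
      using elim by (rule summable_rabs)
    ultimately have "\<bar>(\<Sum>n. a n s) - (\<Sum>n<N. a n s)\<bar>\<^sup>2 \<le> (\<Sum>n. \<bar>a (n + N) s\<bar>)\<^sup>2"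
      by (intro power_mono) simp_all
    then show ?case
      by (simp add: ennreal_leI)
  qed
  then have "(\<integral>\<^sup>+s. ennreal (((\<Sum>n. a n s) - (\<Sum>n<N. a n s))\<^sup>2) \<partial>LT T)
      \<le> (\<integral>\<^sup>+s. ennreal ((\<Sum>n. \<bar>a (n + N) s\<bar>)\<^sup>2) \<partial>LT T)"
    by (rule nn_integral_mono_AE)
  also have "\<dots> \<le> ennreal ((\<Sum>n. L2_norm T (a (n + N)))\<^sup>2)"
    using L2_absolutely_summable_series(2)[of T "\<lambda>n. a (n + N)"] L2 tail(1) by simp
  also have "\<dots> \<le> ennreal ((q ^ N * M / (1 - q))\<^sup>2)"
    using tail suminf_nonneg[OF tail(1) L2_norm_nonneg] by (intro ennreal_leI power_mono)
  finally have "(\<integral>\<^sup>+s. ennreal (((\<Sum>n. a n s) - (\<Sum>n<N. a n s))\<^sup>2) \<partial>LT T)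
      \<le> ennreal ((q ^ N * M / (1 - q))\<^sup>2)" .
  moreover have "(\<lambda>s. (\<Sum>n. a n s) - (\<Sum>n<N. a n s)) \<in> borel_measurable (LT T)"
    by measurable
  moreover have "q ^ N * M / (1 - q) \<ge> 0"
    using q M by simp
  ultimately show "L2T T (\<lambda>s. (\<Sum>n. a n s) - (\<Sum>n<N. a n s))"
    and "L2_norm T (\<lambda>s. (\<Sum>n. a n s) - (\<Sum>n<N. a n s)) \<le> q ^ N * M / (1 - q)"
    using L2_norm_le_if_nn_integral_le by blast+
qed

lemma AE_zero_if_L2_norm_le_geometric:
  assumes "L2T T u" "\<And>N. L2_norm T u \<le> q ^ N * K" "0 \<le> q" "q < 1"
  shows "AE s in LT T. u s = 0"
proof -
  have "(\<lambda>N. q ^ N * K) \<longlonglongrightarrow> 0 * K"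
    using assms(3,4) by (intro tendsto_mult LIMSEQ_power_zero tendsto_const) auto
  then have "L2_norm T u \<le> 0 * K"
    by (rule LIMSEQ_le_const) (use assms(2) in blast)
  then show ?thesis
    using L2_norm_nonneg[of T u] assms(1) by (intro L2_norm_eq_0_imp_AE_zero) auto
qed

lemma L2_norm_coercive_shift_le:
  assumes h: "L2T T h" and k: "L2T T k"
    and bounded: "L2_norm T k \<le> M * L2_norm T h"
    and coercive: "c0 * (L2_norm T h)\<^sup>2 \<le> (\<integral>s. h s * k s \<partial>LT T)"
    and c: "0 < c" "c0 \<le> c" "M\<^sup>2 \<le> c0 * c"
  shows "L2_norm T (\<lambda>s. h s - k s / c) \<le> sqrt (1 - c0 / c) * L2_norm T h"
proof -
  have "(L2_norm T (\<lambda>s. h s - k s / c))\<^sup>2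
      = (\<integral>s. (h s)\<^sup>2 - (2 / c) * (h s * k s) + (1 / c\<^sup>2) * (k s)\<^sup>2 \<partial>LT T)"
    unfolding power2_L2_norm using c
    by (intro Bochner_Integration.integral_cong) (auto simp: power2_eq_square field_simps)
  also have "\<dots> = (L2_norm T h)\<^sup>2 - (2 / c) * (\<integral>s. h s * k s \<partial>LT T) + (1 / c\<^sup>2) * (L2_norm T k)\<^sup>2"
    using h k L2T_integrable_mult[OF h k] by (simp add: power2_L2_norm L2T_integrable_power2)
  also have "\<dots> \<le> (L2_norm T h)\<^sup>2 - (2 / c) * (c0 * (L2_norm T h)\<^sup>2) + (1 / c\<^sup>2) * (M\<^sup>2 * (L2_norm T h)\<^sup>2)"
  proof -
    have "(L2_norm T k)\<^sup>2 \<le> (M * L2_norm T h)\<^sup>2"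
      using bounded by (intro power_mono) (auto simp: L2_norm_nonneg)
    then show ?thesis
      using coercive c(1) by (intro add_mono diff_mono mult_left_mono) (auto simp: power_mult_distrib)
  qed
  also have "\<dots> \<le> (1 - c0 / c) * (L2_norm T h)\<^sup>2"
  proof -
    have "(1 / c\<^sup>2) * (M\<^sup>2 * (L2_norm T h)\<^sup>2) \<le> (1 / c\<^sup>2) * (c0 * c * (L2_norm T h)\<^sup>2)"
      using c by (intro mult_left_mono mult_right_mono) auto
    then show ?thesis
      using c(1) by (simp add: power2_eq_square field_simps)
  qed
  also have "\<dots> = (sqrt (1 - c0 / c) * L2_norm T h)\<^sup>2"
    using c by (simp add: power_mult_distrib)
  finally show ?thesis
    by (rule power2_le_imp_le) (use c in \<open>simp add: L2_norm_nonneg\<close>)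
qed

lemma coercive_shift_iterates:
  fixes A :: "(real \<Rightarrow> real) \<Rightarrow> real \<Rightarrow> real"
  assumes L2: "\<And>h. L2T T h \<Longrightarrow> L2T T (A h)"
    and bounded: "\<And>h. L2T T h \<Longrightarrow> L2_norm T (A h) \<le> M * L2_norm T h"
    and coercive: "\<And>h. L2T T h \<Longrightarrow> c0 * (L2_norm T h)\<^sup>2 \<le> (\<integral>s. h s * A h s \<partial>LT T)"
    and c: "0 < c" "c0 \<le> c" "M\<^sup>2 \<le> c0 * c"
    and f: "L2T T f"
  shows "L2T T (((\<lambda>h s. h s - A h s / c) ^^ n) f)"
    and "L2_norm T (((\<lambda>h s. h s - A h s / c) ^^ n) f) \<le> sqrt (1 - c0 / c) ^ n * L2_norm T f"
proof -
  show L2_iter: "L2T T (((\<lambda>h s. h s - A h s / c) ^^ n) f)" for n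
    by (induction n) (auto simp: f L2 L2T_diff L2T_cmult[of T _ "1 / c", simplified])
  show "L2_norm T (((\<lambda>h s. h s - A h s / c) ^^ n) f) \<le> sqrt (1 - c0 / c) ^ n * L2_norm T f"
  proof (induction n)
    case (Suc n)
    let ?a = "((\<lambda>h s. h s - A h s / c) ^^ n) f"
    have "L2_norm T (\<lambda>s. ?a s - A ?a s / c) \<le> sqrt (1 - c0 / c) * L2_norm T ?a"
      using L2_iter[of n] c by (intro L2_norm_coercive_shift_le[where M=M] L2 bounded coercive) auto
    also have "\<dots> \<le> sqrt (1 - c0 / c) * (sqrt (1 - c0 / c) ^ n * L2_norm T f)"
      using Suc c by (intro mult_left_mono) auto
    finally show ?case
      by simp
  qed simp
qed

lemma telescoping_neumann_sum:
  fixes A :: "(real \<Rightarrow> real) \<Rightarrow> real \<Rightarrow> real"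
  assumes L2: "\<And>h. L2T T h \<Longrightarrow> L2T T (A h)"
    and linear: "\<And>f g a b. L2T T f \<Longrightarrow> L2T T g \<Longrightarrow>
                   A (\<lambda>s. a * f s + b * g s) = (\<lambda>s. a * A f s + b * A g s)"
    and f: "L2T T f"
  shows "A (\<lambda>s. \<Sum>n<N. ((\<lambda>h s. h s - A h s / c) ^^ n) f s / c)
    = (\<lambda>s. f s - ((\<lambda>h s. h s - A h s / c) ^^ N) f s)"
proof (induction N)
  case 0
  show ?case
    using linear[OF L2T_zero L2T_zero, of 0 0] by simp
next
  case (Suc N)
  let ?a = "\<lambda>n. ((\<lambda>h s. h s - A h s / c) ^^ n) f"
  have L2_a: "L2T T (?a n)" for n
    by (induction n) (auto simp: f L2 L2T_diff L2T_cmult[of T _ "1 / c", simplified])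
  have L2_S: "L2T T (\<lambda>s. \<Sum>n<N. ?a n s / c)"
    using L2_a by (intro L2T_sum) (simp add: L2T_cmult[of T _ "1 / c", simplified])
  have "(\<lambda>s. \<Sum>n<Suc N. ?a n s / c) = (\<lambda>s. 1 * (\<Sum>n<N. ?a n s / c) + (1 / c) * ?a N s)"
    by simp
  then have "A (\<lambda>s. \<Sum>n<Suc N. ?a n s / c) = (\<lambda>s. 1 * A (\<lambda>s. \<Sum>n<N. ?a n s / c) s + (1 / c) * A (?a N) s)"
    using linear[OF L2_S L2_a[of N], of 1 "1 / c"] by simp
  then show ?case
    using Suc by (simp add: algebra_simps)
qed

text \<open>Lax--Milgram: the Neumann series of the contraction \<open>h \<mapsto> h - A h / c\<close>, for \<open>c\<close> large
  compared with the bound and the coercivity constant, converges to a solution.\<close>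

lemma coercive_operator_solvable:
  fixes A :: "(real \<Rightarrow> real) \<Rightarrow> real \<Rightarrow> real"
  assumes L2: "\<And>h. L2T T h \<Longrightarrow> L2T T (A h)"
    and bounded: "\<And>h. L2T T h \<Longrightarrow> L2_norm T (A h) \<le> M * L2_norm T h"
    and coercive: "\<And>h. L2T T h \<Longrightarrow> c0 * (L2_norm T h)\<^sup>2 \<le> (\<integral>s. h s * A h s \<partial>LT T)"
    and c0: "c0 > 0"
    and linear: "\<And>f g a b. L2T T f \<Longrightarrow> L2T T g \<Longrightarrow>
                   A (\<lambda>s. a * f s + b * g s) = (\<lambda>s. a * A f s + b * A g s)"
    and f: "L2T T f"
  shows "\<exists>g. L2T T g \<and> (AE s in LT T. A g s = f s)"
proof -
  define c where "c = M\<^sup>2 / c0 + c0"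
  have c: "0 < c" "c0 \<le> c" "M\<^sup>2 \<le> c0 * c"
    using c0 by (auto simp: c_def field_simps add_pos_nonneg)
  define q where "q = sqrt (1 - c0 / c)"
  have q: "0 \<le> q" "q < 1"
    using c c0 by (auto simp: q_def)
  define a where "a n = ((\<lambda>h s. h s - A h s / c) ^^ n) f" for n
  note a = coercive_shift_iterates[where A=A, OF L2 bounded coercive c f, folded q_def a_def]
  define S where "S N s = (\<Sum>n<N. a n s / c)" for N s
  define g where "g s = (\<Sum>n. a n s / c)" for s
  define C where "C = L2_norm T f / c / (1 - q)"
  have tail: "L2T T (\<lambda>s. g s - S N s)" "L2_norm T (\<lambda>s. g s - S N s) \<le> q ^ N * C" for N
    using L2_geometric_series_tail[of T "\<lambda>n s. a n s / c" q "L2_norm T f / c" N] a q c(1)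
    by (auto simp: g_def S_def C_def L2T_cmult[of T _ "1 / c", simplified] L2_norm_cmult[of T "1 / c", simplified]
      divide_right_mono)
  have S_L2: "L2T T (S N)" for N
    unfolding S_def using a(1) by (intro L2T_sum) (simp add: L2T_cmult[of T _ "1 / c", simplified])
  have g_L2: "L2T T g"
    using tail(1)[of 0] by (simp add: S_def)
  have "L2_norm T (\<lambda>s. A g s - f s) \<le> q ^ N * (\<bar>M\<bar> * C + L2_norm T f)" for N
  proof -
    have A_S: "A (S N) = (\<lambda>s. f s - a N s)"
      unfolding S_def a_def by (rule telescoping_neumann_sum[where A=A, OF L2 linear f])
    have "A g = (\<lambda>s. 1 * A (S N) s + 1 * A (\<lambda>s. g s - S N s) s)"
      using linear[OF S_L2[of N] tail(1)[of N], of 1 1] by simp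
    then have "(\<lambda>s. A g s - f s) = (\<lambda>s. A (\<lambda>s. g s - S N s) s - a N s)"
      by (simp add: A_S)
    then have "L2_norm T (\<lambda>s. A g s - f s) \<le> L2_norm T (A (\<lambda>s. g s - S N s)) + L2_norm T (a N)"
      using L2_norm_diff_le[OF L2[OF tail(1)] a(1)] by simp
    also have "\<dots> \<le> \<bar>M\<bar> * (q ^ N * C) + q ^ N * L2_norm T f"
    proof (intro add_mono a(2))
      have "L2_norm T (A (\<lambda>s. g s - S N s)) \<le> M * L2_norm T (\<lambda>s. g s - S N s)"
        by (rule bounded[OF tail(1)])
      also have "\<dots> \<le> \<bar>M\<bar> * (q ^ N * C)"
        using tail(2)[of N] by (intro mult_mono) (auto simp: L2_norm_nonneg)
      finally show "L2_norm T (A (\<lambda>s. g s - S N s)) \<le> \<bar>M\<bar> * (q ^ N * C)" .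
    qed
    finally show ?thesis
      by (simp add: algebra_simps)
  qed
  then have "AE s in LT T. A g s - f s = 0"
    using q by (intro AE_zero_if_L2_norm_le_geometric L2T_diff L2 g_L2 f)
  then have "AE s in LT T. A g s = f s"
    by eventually_elim simp
  with g_L2 show ?thesis
    by blast
qed

section \<open>Integral operators with row-bounded kernels\<close>

definition row_bounded_kernel :: "real \<Rightarrow> (real \<Rightarrow> real \<Rightarrow> real) \<Rightarrow> real \<Rightarrow> bool" where
  "row_bounded_kernel T K R \<longleftrightarrow> (\<lambda>(s, u). K s u) \<in> borel_measurable borel \<and> R \<ge> 0 \<and>
     (\<forall>s. (\<integral>\<^sup>+u. ennreal ((K s u)\<^sup>2) \<partial>LT T) \<le> ennreal R)"

lemma measurable_pair_LT: "(\<lambda>p. p) \<in> LT T \<Otimes>\<^sub>M LT T \<rightarrow>\<^sub>M borel"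
  unfolding borel_prod[symmetric] by (simp add: measurable_pair_iff)

lemma measurable_pair_borel_LT: "(\<lambda>p. p) \<in> (borel :: real measure) \<Otimes>\<^sub>M LT T \<rightarrow>\<^sub>M borel"
  unfolding borel_prod[symmetric] by (simp add: measurable_pair_iff)

lemma measurable_section_LT:
  "(\<lambda>u. (s :: real, u)) \<in> LT T \<rightarrow>\<^sub>M borel" "(\<lambda>u. (u, s :: real)) \<in> LT T \<rightarrow>\<^sub>M borel"
  unfolding borel_prod[symmetric] by (simp_all add: measurable_pair_iff comp_def)

lemma borel_measurable_kernel_transpose:
  fixes K :: "real \<Rightarrow> real \<Rightarrow> real"
  assumes "(\<lambda>(s, u). K s u) \<in> borel_measurable borel"
  shows "(\<lambda>(s, u). K u s) \<in> borel_measurable borel"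
  using assms unfolding borel_prod[symmetric] by measurable

lemma borel_measurable_kernel_LT:
  fixes K :: "real \<Rightarrow> real \<Rightarrow> real"
  assumes "(\<lambda>(s, u). K s u) \<in> borel_measurable borel"
  shows "(\<lambda>(s, u). K s u) \<in> borel_measurable (LT T \<Otimes>\<^sub>M LT T)"
    and "(\<lambda>u. K s u) \<in> borel_measurable (LT T)"
    and "(\<lambda>s. K s u) \<in> borel_measurable (LT T)"
proof -
  show "(\<lambda>(s, u). K s u) \<in> borel_measurable (LT T \<Otimes>\<^sub>M LT T)"
    using measurable_compose[OF measurable_pair_LT assms] by simp
  show "(\<lambda>u. K s u) \<in> borel_measurable (LT T)" "(\<lambda>s. K s u) \<in> borel_measurable (LT T)"
    using measurable_compose[OF measurable_section_LT(1) assms]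
      measurable_compose[OF measurable_section_LT(2) assms] by simp_all
qed

lemma row_bounded_kernel_row:
  assumes "row_bounded_kernel T K R"
  shows "L2T T (\<lambda>u. K s u)" "L2_norm T (\<lambda>u. K s u) \<le> sqrt R"
proof -
  have R: "R \<ge> 0" and row: "(\<integral>\<^sup>+u. ennreal ((K s u)\<^sup>2) \<partial>LT T) \<le> ennreal ((sqrt R)\<^sup>2)"
    using assms by (simp_all add: row_bounded_kernel_def)
  have "(\<lambda>u. K s u) \<in> borel_measurable (LT T)"
    using assms borel_measurable_kernel_LT(2) unfolding row_bounded_kernel_def by blast
  from L2_norm_le_if_nn_integral_le[OF this real_sqrt_ge_zero[OF R] row]
  show "L2T T (\<lambda>u. K s u)" "L2_norm T (\<lambda>u. K s u) \<le> sqrt R"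
    by blast+
qed

lemma kop_integrable:
  "row_bounded_kernel T K R \<Longrightarrow> L2T T h \<Longrightarrow> integrable (LT T) (\<lambda>u. K s u * h u)"
  by (rule L2T_integrable_mult[OF row_bounded_kernel_row(1)])

lemma abs_kop_le:
  assumes "row_bounded_kernel T K R" "L2T T h"
  shows "\<bar>kop T K h s\<bar> \<le> sqrt R * L2_norm T h"
proof -
  have "\<bar>kop T K h s\<bar> \<le> L2_norm T (\<lambda>u. K s u) * L2_norm T h"
    unfolding kop_def by (rule abs_integral_mult_le_L2_norm[OF row_bounded_kernel_row(1)[OF assms(1)] assms(2)])
  also have "\<dots> \<le> sqrt R * L2_norm T h"
    using assms by (intro mult_right_mono row_bounded_kernel_row(2) L2_norm_nonneg)
  finally show ?thesis .
qed

lemma kop_L2T: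
  assumes T: "T \<ge> 0" and K: "row_bounded_kernel T K R" and h: "L2T T h"
  shows "L2T T (kop T K h)" "L2_norm T (kop T K h) \<le> sqrt (T * R) * L2_norm T h"
proof -
  interpret sigma_finite_measure "LT T"
    using sigma_finite_measure_LT[OF T] .
  have [measurable]: "(\<lambda>(s, u). K s u) \<in> borel_measurable (LT T \<Otimes>\<^sub>M LT T)"
    using K unfolding row_bounded_kernel_def by (intro borel_measurable_kernel_LT(1)) simp
  have [measurable]: "h \<in> borel_measurable (LT T)"
    using h by measurable
  have "(\<lambda>(s, u). K s u * h u) \<in> borel_measurable (LT T \<Otimes>\<^sub>M LT T)"
    by measurable
  then have meas: "kop T K h \<in> borel_measurable (LT T)"
    unfolding kop_def by (rule borel_measurable_lebesgue_integral[where f="\<lambda>s u. K s u * h u", simplified])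
  have R: "R \<ge> 0"
    using K by (simp add: row_bounded_kernel_def)
  have "(kop T K h s)\<^sup>2 \<le> (sqrt R * L2_norm T h)\<^sup>2" for s
    using abs_kop_le[OF K h, of s] R by (simp add: power2_le_iff_abs_le L2_norm_nonneg)
  then have "(\<integral>\<^sup>+s. ennreal ((kop T K h s)\<^sup>2) \<partial>LT T) \<le> (\<integral>\<^sup>+s. ennreal ((sqrt R * L2_norm T h)\<^sup>2) \<partial>LT T)"
    by (intro nn_integral_mono ennreal_leI)
  also have "\<dots> = ennreal ((sqrt R * L2_norm T h)\<^sup>2) * ennreal T"
    using T by (simp add: emeasure_LT)
  also have "\<dots> = ennreal ((sqrt (T * R) * L2_norm T h)\<^sup>2)"
    using T R by (simp add: ennreal_mult[symmetric] power_mult_distrib real_sqrt_mult)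
  finally have int_le: "(\<integral>\<^sup>+s. ennreal ((kop T K h s)\<^sup>2) \<partial>LT T) \<le> ennreal ((sqrt (T * R) * L2_norm T h)\<^sup>2)" .
  have "0 \<le> sqrt (T * R) * L2_norm T h"
    using T R by (simp add: L2_norm_nonneg)
  from L2_norm_le_if_nn_integral_le[OF meas this int_le]
  show "L2T T (kop T K h)" "L2_norm T (kop T K h) \<le> sqrt (T * R) * L2_norm T h"
    by blast+
qed

lemma kop_linear:
  assumes "row_bounded_kernel T K R" "L2T T f" "L2T T g"
  shows "kop T K (\<lambda>u. a * f u + b * g u) s = a * kop T K f s + b * kop T K g s"
proof -
  have "kop T K (\<lambda>u. a * f u + b * g u) s = (\<integral>u. a * (K s u * f u) + b * (K s u * g u) \<partial>LT T)"
    unfolding kop_def by (rule Bochner_Integration.integral_cong) (auto simp: algebra_simps)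
  then show ?thesis
    using kop_integrable[OF assms(1,2), of s] kop_integrable[OF assms(1,3), of s] by (simp add: kop_def)
qed

lemma kop_add_kernel:
  assumes "row_bounded_kernel T K1 R1" "row_bounded_kernel T K2 R2" "L2T T h"
  shows "kop T (\<lambda>s u. K1 s u + K2 s u) h s = kop T K1 h s + kop T K2 h s"
  using kop_integrable[OF assms(1,3), of s] kop_integrable[OF assms(2,3), of s]
  by (simp add: kop_def distrib_right)

lemma kop_cmult_kernel: "kop T (\<lambda>s u. c * K s u) h s = c * kop T K h s"
  by (simp add: kop_def mult.assoc)

lemma row_bounded_kernel_add:
  assumes K1: "row_bounded_kernel T K1 R1" and K2: "row_bounded_kernel T K2 R2"
  shows "row_bounded_kernel T (\<lambda>s u. K1 s u + K2 s u) (2 * R1 + 2 * R2)"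
proof -
  have R: "R1 \<ge> 0" "R2 \<ge> 0"
    using assms by (simp_all add: row_bounded_kernel_def)
  have "(\<lambda>(s, u). K1 s u + K2 s u) \<in> borel_measurable borel"
    using assms borel_measurable_add[of "\<lambda>(s, u). K1 s u" borel "\<lambda>(s, u). K2 s u"]
    by (simp add: row_bounded_kernel_def split_def)
  moreover have "(\<integral>\<^sup>+u. ennreal ((K1 s u + K2 s u)\<^sup>2) \<partial>LT T) \<le> ennreal (2 * R1 + 2 * R2)" for s
  proof -
    have [measurable]: "(\<lambda>u. K1 s u) \<in> borel_measurable (LT T)" "(\<lambda>u. K2 s u) \<in> borel_measurable (LT T)"
      using assms unfolding row_bounded_kernel_def by (simp_all add: borel_measurable_kernel_LT(2))
    have "(K1 s u + K2 s u)\<^sup>2 \<le> 2 * (K1 s u)\<^sup>2 + 2 * (K2 s u)\<^sup>2" for u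
      using sum_squares_bound[of "K1 s u" "K2 s u"] by (simp add: power2_sum)
    then have "(\<integral>\<^sup>+u. ennreal ((K1 s u + K2 s u)\<^sup>2) \<partial>LT T)
        \<le> (\<integral>\<^sup>+u. ennreal (2 * (K1 s u)\<^sup>2 + 2 * (K2 s u)\<^sup>2) \<partial>LT T)"
      by (intro nn_integral_mono ennreal_leI)
    also have "\<dots> = 2 * (\<integral>\<^sup>+u. ennreal ((K1 s u)\<^sup>2) \<partial>LT T) + 2 * (\<integral>\<^sup>+u. ennreal ((K2 s u)\<^sup>2) \<partial>LT T)"
      by (simp add: ennreal_plus ennreal_mult nn_integral_add nn_integral_cmult)
    also have "\<dots> \<le> 2 * ennreal R1 + 2 * ennreal R2"
      using assms unfolding row_bounded_kernel_def by (intro add_mono mult_left_mono) auto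
    also have "\<dots> = ennreal (2 * R1 + 2 * R2)"
      using R by (simp add: ennreal_plus ennreal_mult)
    finally show ?thesis .
  qed
  ultimately show ?thesis
    using R by (simp add: row_bounded_kernel_def)
qed

lemma row_bounded_kernel_if_bounded:
  assumes T: "T \<ge> 0" and meas: "(\<lambda>(s, u). K s u) \<in> borel_measurable borel"
    and bound: "\<And>s u. \<bar>K s u\<bar> \<le> B"
  shows "row_bounded_kernel T K (B\<^sup>2 * T)"
proof -
  have B: "B \<ge> 0"
    using bound[of 0 0] by simp
  have "(\<integral>\<^sup>+u. ennreal ((K s u)\<^sup>2) \<partial>LT T) \<le> (\<integral>\<^sup>+u. ennreal (B\<^sup>2) \<partial>LT T)" for s
    using bound B by (intro nn_integral_mono ennreal_leI) (simp add: power2_le_iff_abs_le)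
  also have "\<dots> = ennreal (B\<^sup>2 * T)"
    using T by (simp add: emeasure_LT ennreal_mult)
  finally show ?thesis
    using T meas by (simp add: row_bounded_kernel_def)
qed

lemma row_bounded_kernel_mult_weight:
  assumes K: "row_bounded_kernel T K R" and meas: "(\<lambda>(s, u). w s u) \<in> borel_measurable borel"
    and bound: "\<And>s u. \<bar>w s u\<bar> \<le> 1"
  shows "row_bounded_kernel T (\<lambda>s u. K s u * w s u) R"
proof -
  have "(\<lambda>(s, u). K s u * w s u) \<in> borel_measurable borel"
    using K meas borel_measurable_times[of "\<lambda>(s, u). K s u" borel "\<lambda>(s, u). w s u"]
    by (simp add: row_bounded_kernel_def split_def)
  moreover have "(\<integral>\<^sup>+u. ennreal ((K s u * w s u)\<^sup>2) \<partial>LT T) \<le> (\<integral>\<^sup>+u. ennreal ((K s u)\<^sup>2) \<partial>LT T)" for s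
  proof (intro nn_integral_mono ennreal_leI)
    fix u
    have "(w s u)\<^sup>2 \<le> 1"
      using bound[of s u] by (simp add: abs_square_le_1)
    then show "(K s u * w s u)\<^sup>2 \<le> (K s u)\<^sup>2"
      by (simp add: power_mult_distrib mult_left_le)
  qed
  ultimately show ?thesis
    using K unfolding row_bounded_kernel_def by (blast intro: order_trans)
qed

lemma integrable_kernel_sandwich:
  assumes T: "T \<ge> 0" and Kt: "row_bounded_kernel T (\<lambda>s u. K u s) R"
    and h: "L2T T h" and w: "L2T T w"
  shows "integrable (LT T \<Otimes>\<^sub>M LT T) (\<lambda>p. h (fst p) * (K (snd p) (fst p) * w (snd p)))"
proof -
  interpret pair_sigma_finite "LT T" "LT T"
    using sigma_finite_measure_LT[OF T] by (simp add: pair_sigma_finite_def)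
  define F where "F s u = h s * (K u s * w u)" for s u
  have [measurable]: "h \<in> borel_measurable (LT T)" "w \<in> borel_measurable (LT T)"
    using h w by measurable
  have "(\<lambda>(s, u). K u s) \<in> borel_measurable (LT T \<Otimes>\<^sub>M LT T)"
    using Kt unfolding row_bounded_kernel_def by (intro borel_measurable_kernel_LT(1)) simp
  then have [measurable]: "(\<lambda>p. K (snd p) (fst p)) \<in> borel_measurable (LT T \<Otimes>\<^sub>M LT T)"
    by (simp add: split_def)
  have F_meas: "(\<lambda>p. F (fst p) (snd p)) \<in> borel_measurable (LT T \<Otimes>\<^sub>M LT T)"
    unfolding F_def by measurable
  have R: "R \<ge> 0"
    using Kt by (simp add: row_bounded_kernel_def)
  have bound: "(\<integral>u. norm (F s u) \<partial>LT T) \<le> \<bar>h s\<bar> * (sqrt R * L2_norm T w)" for s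
  proof -
    have "(\<integral>u. \<bar>K u s\<bar> * \<bar>w u\<bar> \<partial>LT T) \<le> L2_norm T (\<lambda>u. \<bar>K u s\<bar>) * L2_norm T (\<lambda>u. \<bar>w u\<bar>)"
      using abs_integral_mult_le_L2_norm[OF L2T_abs[OF row_bounded_kernel_row(1)[OF Kt]] L2T_abs[OF w]]
      by simp
    also have "\<dots> \<le> sqrt R * L2_norm T w"
      unfolding L2_norm_abs by (intro mult_right_mono row_bounded_kernel_row(2)[OF Kt] L2_norm_nonneg)
    finally show ?thesis
      by (simp add: F_def abs_mult mult_left_mono)
  qed
  have int_norm: "integrable (LT T) (\<lambda>s. \<integral>u. norm (F s u) \<partial>LT T)"
  proof (rule Bochner_Integration.integrable_bound)
    show "integrable (LT T) (\<lambda>s. \<bar>h s\<bar> * (sqrt R * L2_norm T w))"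
      using L2T_integrable[OF T h] by (intro integrable_mult_left integrable_abs)
    show "(\<lambda>s. \<integral>u. norm (F s u) \<partial>LT T) \<in> borel_measurable (LT T)"
      using F_meas by (intro sigma_finite_measure.borel_measurable_lebesgue_integral[OF sigma_finite_measure_LT[OF T],
          where f="\<lambda>s u. norm (F s u)"]) (simp add: split_def)
    show "AE s in LT T. norm (\<integral>u. norm (F s u) \<partial>LT T) \<le> norm (\<bar>h s\<bar> * (sqrt R * L2_norm T w))"
      using bound R by (intro AE_I2) (simp add: abs_mult L2_norm_nonneg)
  qed
  have F_row: "integrable (LT T) (F s)" for s
    unfolding F_def using kop_integrable[OF Kt w, of s] by simp
  have "integrable (LT T \<Otimes>\<^sub>M LT T) (\<lambda>p. F (fst p) (snd p))"
    using Fubini_integrable[OF F_meas] int_norm F_row by simp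
  then show ?thesis
    by (simp add: F_def)
qed

lemma integral_mult_kop_transpose:
  assumes T: "T \<ge> 0" and Kt: "row_bounded_kernel T (\<lambda>s u. K u s) R"
    and h: "L2T T h" and w: "L2T T w"
  shows "(\<integral>s. h s * kop T (\<lambda>s u. K u s) w s \<partial>LT T) = (\<integral>u. w u * kop T K h u \<partial>LT T)"
proof -
  interpret pair_sigma_finite "LT T" "LT T"
    using sigma_finite_measure_LT[OF T] by (simp add: pair_sigma_finite_def)
  have "(\<integral>s. (\<integral>u. h s * (K u s * w u) \<partial>LT T) \<partial>LT T) = (\<integral>u. (\<integral>s. h s * (K u s * w u) \<partial>LT T) \<partial>LT T)"
    using Fubini_integral[of "\<lambda>s u. h s * (K u s * w u)"] integrable_kernel_sandwich[OF T Kt h w]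
    by (simp add: split_def)
  moreover have "(\<integral>s. h s * (K u s * w u) \<partial>LT T) = w u * kop T K h u" for u
  proof -
    have "(\<integral>s. h s * (K u s * w u) \<partial>LT T) = (\<integral>s. w u * (K u s * h s) \<partial>LT T)"
      by (rule Bochner_Integration.integral_cong) (simp_all add: mult_ac)
    then show ?thesis
      by (simp add: kop_def)
  qed
  ultimately show ?thesis
    by (simp add: kop_def)
qed

lemma integral_symmetrised_kernel:
  assumes T: "T \<ge> 0" and V: "row_bounded_kernel T V R" and Vt: "row_bounded_kernel T (\<lambda>s u. V u s) R'"
    and k: "L2T T k"
  shows "(\<integral>t. (\<integral>s. (V t s + V s t) * k s * k t \<partial>LT T) \<partial>LT T) = 2 * (\<integral>t. k t * kop T V k t \<partial>LT T)"
proof -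
  have "(\<integral>s. (V t s + V s t) * k s * k t \<partial>LT T) = k t * kop T V k t + k t * kop T (\<lambda>s u. V u s) k t" for t
  proof -
    have "(\<integral>s. (V t s + V s t) * k s * k t \<partial>LT T) = (\<integral>s. k t * (V t s * k s) + k t * (V s t * k s) \<partial>LT T)"
      by (rule Bochner_Integration.integral_cong) (auto simp: algebra_simps)
    then show ?thesis
      using kop_integrable[OF V k, of t] kop_integrable[OF Vt k, of t] by (simp add: kop_def)
  qed
  then have "(\<integral>t. (\<integral>s. (V t s + V s t) * k s * k t \<partial>LT T) \<partial>LT T)
      = (\<integral>t. k t * kop T V k t \<partial>LT T) + (\<integral>t. k t * kop T (\<lambda>s u. V u s) k t \<partial>LT T)"
    using L2T_integrable_mult[OF k kop_L2T(1)[OF T V k]] L2T_integrable_mult[OF k kop_L2T(1)[OF T Vt k]]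
    by simp
  also have "(\<integral>t. k t * kop T (\<lambda>s u. V u s) k t \<partial>LT T) = (\<integral>t. k t * kop T V k t \<partial>LT T)"
    by (rule integral_mult_kop_transpose[OF T Vt k k])
  finally show ?thesis
    by simp
qed

section \<open>A Borel version of the kernel\<close>

lemma AE_LT_AE_LT_if_AE_lborel:
  assumes "AE s in lborel. AE u in lborel. P s u"
  shows "AE s in LT T. AE u in LT T. s \<in> {0..T} \<and> u \<in> {0..T} \<and> P s u"
proof -
  have "AE s in lborel. AE u in LT T. P s u"
    using assms by eventually_elim (rule AE_LT_if_AE_lborel)
  then have "AE s in LT T. AE u in LT T. P s u"
    by (rule AE_LT_if_AE_lborel)
  then show ?thesis
    using AE_LT_in_interval by eventually_elim (use AE_LT_in_interval in \<open>auto elim: AE_mp\<close>)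
qed

lemma borel_version_of_kernel:
  fixes G :: "real \<Rightarrow> real \<Rightarrow> real"
  assumes "(\<lambda>(t, s). G t s) \<in> borel_measurable (lebesgue_on ({0..T} \<times> {0..T}))"
  obtains G0 :: "real \<times> real \<Rightarrow> real" where "G0 \<in> borel_measurable borel"
    and "AE s in LT T. AE u in LT T. G s u = G0 (s, u)"
    and "AE u in LT T. AE s in LT T. G s u = G0 (s, u)"
proof -
  define Q where "Q = {0..T} \<times> {0..T :: real}"
  define Gx where "Gx p = (if p \<in> Q then G (fst p) (snd p) else 0)" for p
  have "Q \<in> sets lebesgue"
  proof -
    have "closed Q"
      unfolding Q_def by (intro closed_Times) auto
    then show ?thesis
      by simp
  qed
  then have "Gx \<in> borel_measurable lebesgue"
    using assms unfolding Gx_def Q_def by (intro borel_measurable_if_I) (simp_all add: split_def)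
  then obtain G0 where G0: "G0 \<in> borel_measurable lborel" and "AE p in lborel. Gx p = G0 p"
    using completion_ex_borel_measurable_real by blast
  then obtain N where "{p \<in> space lborel. Gx p \<noteq> G0 p} \<subseteq> N" "emeasure lborel N = 0" "N \<in> sets lborel"
    by (elim AE_E) auto
  then have N: "N \<in> null_sets (lborel \<Otimes>\<^sub>M lborel)" and off_N: "\<And>p. p \<notin> N \<Longrightarrow> Gx p = G0 p"
    by (auto simp: lborel_prod null_setsI)
  have AE_N: "AE p in lborel \<Otimes>\<^sub>M lborel. p \<notin> N"
    by (rule AE_not_in[OF N])
  have "{p \<in> space (lborel \<Otimes>\<^sub>M lborel). (fst p, snd p) \<notin> N} = space (lborel \<Otimes>\<^sub>M lborel) - N"
    by auto
  then have "{p \<in> space (lborel \<Otimes>\<^sub>M lborel). (fst p, snd p) \<notin> N} \<in> sets (lborel \<Otimes>\<^sub>M lborel)"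
    using sets.compl_sets[OF null_setsD2[OF N]] by simp
  then have "AE u in lborel. AE s in lborel. (s, u) \<notin> N"
    using lborel_pair.AE_commute[of "\<lambda>s u. (s, u) \<notin> N"] lborel_pair.AE_pair[OF AE_N] by simp
  moreover have "AE s in lborel. AE u in lborel. (s, u) \<notin> N"
    by (rule lborel_pair.AE_pair[OF AE_N])
  moreover have "G s u = G0 (s, u)" if "s \<in> {0..T} \<and> u \<in> {0..T} \<and> (s, u) \<notin> N" for s u
    using off_N[of "(s, u)"] that by (simp add: Gx_def Q_def)
  ultimately have "AE s in LT T. AE u in LT T. G s u = G0 (s, u)"
    and "AE u in LT T. AE s in LT T. G s u = G0 (s, u)"
    using AE_LT_AE_LT_if_AE_lborel[of "\<lambda>s u. (s, u) \<notin> N" T]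
      AE_LT_AE_LT_if_AE_lborel[of "\<lambda>u s. (s, u) \<notin> N" T]
    by (fastforce elim: AE_mp)+
  with G0 that show ?thesis
    by simp
qed

lemma borel_measurable_nn_integral_row:
  fixes G0 :: "real \<times> real \<Rightarrow> real"
  assumes T: "T \<ge> 0" and G0: "G0 \<in> borel_measurable borel"
  shows "(\<lambda>s. \<integral>\<^sup>+u. ennreal ((G0 (s, u))\<^sup>2) \<partial>LT T) \<in> borel_measurable borel"
proof -
  have "(\<lambda>p. ennreal ((G0 p)\<^sup>2)) \<in> borel_measurable borel"
    using G0 by measurable
  then have "(\<lambda>p. ennreal ((G0 p)\<^sup>2)) \<in> borel_measurable (borel \<Otimes>\<^sub>M LT T)"
    using measurable_compose[OF measurable_pair_borel_LT] by blast
  then show ?thesis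
    using sigma_finite_measure.borel_measurable_nn_integral_fst[OF sigma_finite_measure_LT[OF T],
        of "\<lambda>p. ennreal ((G0 p)\<^sup>2)"] by simp
qed

lemma AE_row_bound_if_AE_eq:
  assumes "AE s in LT T. AE u in LT T. f s u = g s u"
    and "\<And>s. s \<in> {0..T} \<Longrightarrow> (\<integral>\<^sup>+u. ennreal ((f s u)\<^sup>2) \<partial>LT T) \<le> S"
  shows "AE s in LT T. (\<integral>\<^sup>+u. ennreal ((g s u)\<^sup>2) \<partial>LT T) \<le> S"
  using assms(1) AE_LT_in_interval
proof eventually_elim
  case (elim s)
  have "(\<integral>\<^sup>+u. ennreal ((g s u)\<^sup>2) \<partial>LT T) = (\<integral>\<^sup>+u. ennreal ((f s u)\<^sup>2) \<partial>LT T)"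
    using elim(1) by (intro nn_integral_cong_AE) (auto elim: AE_mp)
  with assms(2)[OF elim(2)] show ?case
    by simp
qed

lemma kernel_class_L2_bounds:
  assumes "kernel_class T G"
  obtains S where "S \<ge> 0"
    and "\<And>s. s \<in> {0..T} \<Longrightarrow> (\<integral>\<^sup>+u. ennreal ((G s u)\<^sup>2) \<partial>LT T) \<le> ennreal S"
    and "\<And>u. u \<in> {0..T} \<Longrightarrow> (\<integral>\<^sup>+s. ennreal ((G s u)\<^sup>2) \<partial>LT T) \<le> ennreal S"
proof -
  define A1 where "A1 = (SUP s\<in>{0..T}. \<integral>\<^sup>+u. ennreal ((G s u)\<^sup>2) \<partial>LT T)"
  define A2 where "A2 = (SUP u\<in>{0..T}. \<integral>\<^sup>+s. ennreal ((G s u)\<^sup>2) \<partial>LT T)"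
  have "A1 + A2 < \<infinity>"
    using assms by (simp add: kernel_class_def A1_def A2_def)
  then obtain S1 S2 where S: "A1 = ennreal S1" "A2 = ennreal S2" "S1 \<ge> 0" "S2 \<ge> 0"
    by (cases A1; cases A2) auto
  have "A1 \<le> ennreal (max S1 S2)" "A2 \<le> ennreal (max S1 S2)"
    using S by (simp_all add: ennreal_leI)
  moreover have "(\<integral>\<^sup>+u. ennreal ((G s u)\<^sup>2) \<partial>LT T) \<le> A1" if "s \<in> {0..T}" for s
    unfolding A1_def by (rule SUP_upper[OF that])
  moreover have "(\<integral>\<^sup>+s. ennreal ((G s u)\<^sup>2) \<partial>LT T) \<le> A2" if "u \<in> {0..T}" for u
    unfolding A2_def by (rule SUP_upper[OF that])
  ultimately show ?thesis
    using that[of "max S1 S2"] S by (meson max.coboundedI1 order_trans)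
qed

definition truncated_kernel :: "real \<Rightarrow> real \<Rightarrow> (real \<times> real \<Rightarrow> real) \<Rightarrow> real \<Rightarrow> real \<Rightarrow> real" where
  "truncated_kernel T S G0 s u =
     (if (\<integral>\<^sup>+v. ennreal ((G0 (s, v))\<^sup>2) \<partial>LT T) \<le> ennreal S
       \<and> (\<integral>\<^sup>+v. ennreal ((G0 (v, u))\<^sup>2) \<partial>LT T) \<le> ennreal S \<and> u < s
      then G0 (s, u) else 0)"

lemma row_bounded_truncated_kernel:
  assumes T: "T \<ge> 0" and G0: "G0 \<in> borel_measurable borel" and S: "S \<ge> 0"
  shows "row_bounded_kernel T (truncated_kernel T S G0) S"
    and "row_bounded_kernel T (\<lambda>s u. truncated_kernel T S G0 u s) S"
proof -
  have G0_swap: "(\<lambda>p. G0 (snd p, fst p)) \<in> borel_measurable borel"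
    using G0 unfolding borel_prod[symmetric] by measurable
  have [measurable]: "(\<lambda>s. \<integral>\<^sup>+v. ennreal ((G0 (s, v))\<^sup>2) \<partial>LT T) \<in> borel_measurable borel"
    "(\<lambda>u. \<integral>\<^sup>+v. ennreal ((G0 (v, u))\<^sup>2) \<partial>LT T) \<in> borel_measurable borel"
    using borel_measurable_nn_integral_row[OF T G0] borel_measurable_nn_integral_row[OF T G0_swap] by simp_all
  have meas: "(\<lambda>(s, u). truncated_kernel T S G0 s u) \<in> borel_measurable borel"
    using G0 unfolding truncated_kernel_def borel_prod[symmetric] split_def by measurable
  have "(\<integral>\<^sup>+u. ennreal ((truncated_kernel T S G0 s u)\<^sup>2) \<partial>LT T) \<le> ennreal S" for s
    using order_trans[OF nn_integral_mono[of "LT T" "\<lambda>u. ennreal ((truncated_kernel T S G0 s u)\<^sup>2)"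
          "\<lambda>u. ennreal ((G0 (s, u))\<^sup>2)"]]
    by (cases "(\<integral>\<^sup>+v. ennreal ((G0 (s, v))\<^sup>2) \<partial>LT T) \<le> ennreal S")
      (auto simp: truncated_kernel_def intro: ennreal_leI)
  moreover have "(\<integral>\<^sup>+s. ennreal ((truncated_kernel T S G0 s u)\<^sup>2) \<partial>LT T) \<le> ennreal S" for u
    using order_trans[OF nn_integral_mono[of "LT T" "\<lambda>s. ennreal ((truncated_kernel T S G0 s u)\<^sup>2)"
          "\<lambda>s. ennreal ((G0 (s, u))\<^sup>2)"]]
    by (cases "(\<integral>\<^sup>+v. ennreal ((G0 (v, u))\<^sup>2) \<partial>LT T) \<le> ennreal S")
      (auto simp: truncated_kernel_def intro: ennreal_leI)
  ultimately show "row_bounded_kernel T (truncated_kernel T S G0) S"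
    "row_bounded_kernel T (\<lambda>s u. truncated_kernel T S G0 u s) S"
    using meas borel_measurable_kernel_transpose[OF meas] S
    unfolding row_bounded_kernel_def by blast+
qed

lemma kernel_class_borel_version:
  assumes T: "T \<ge> 0" and G: "kernel_class T G"
  obtains G1 S where "row_bounded_kernel T G1 S" "row_bounded_kernel T (\<lambda>s u. G1 u s) S"
    and "\<And>s u. G1 s u \<noteq> 0 \<Longrightarrow> u < s"
    and "AE s in LT T. AE u in LT T. G s u = G1 s u"
    and "AE u in LT T. AE s in LT T. G s u = G1 s u"
proof -
  obtain S where S: "S \<ge> 0"
    and row_le: "\<And>s. s \<in> {0..T} \<Longrightarrow> (\<integral>\<^sup>+u. ennreal ((G s u)\<^sup>2) \<partial>LT T) \<le> ennreal S"
    and col_le: "\<And>u. u \<in> {0..T} \<Longrightarrow> (\<integral>\<^sup>+s. ennreal ((G s u)\<^sup>2) \<partial>LT T) \<le> ennreal S"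
    using kernel_class_L2_bounds[OF G] by blast
  obtain G0 where G0: "G0 \<in> borel_measurable borel"
    and rows: "AE s in LT T. AE u in LT T. G s u = G0 (s, u)"
    and cols: "AE u in LT T. AE s in LT T. G s u = G0 (s, u)"
    using borel_version_of_kernel G unfolding kernel_class_def by blast
  define G1 where "G1 = truncated_kernel T S G0"
  have good: "AE s in LT T. (\<integral>\<^sup>+v. ennreal ((G0 (s, v))\<^sup>2) \<partial>LT T) \<le> ennreal S"
    "AE u in LT T. (\<integral>\<^sup>+v. ennreal ((G0 (v, u))\<^sup>2) \<partial>LT T) \<le> ennreal S"
    using AE_row_bound_if_AE_eq[OF rows row_le]
      AE_row_bound_if_AE_eq[where f="\<lambda>u s. G s u" and g="\<lambda>u s. G0 (s, u)", OF cols col_le]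
    by simp_all
  have eq: "G s u = G1 s u"
    if "s \<in> {0..T}" "u \<in> {0..T}" "G s u = G0 (s, u)"
      "(\<integral>\<^sup>+v. ennreal ((G0 (s, v))\<^sup>2) \<partial>LT T) \<le> ennreal S"
      "(\<integral>\<^sup>+v. ennreal ((G0 (v, u))\<^sup>2) \<partial>LT T) \<le> ennreal S" for s u
    using that G by (auto simp: G1_def truncated_kernel_def kernel_class_def)
  have "AE s in LT T. AE u in LT T. G s u = G1 s u"
    using rows good(1) AE_LT_in_interval
  proof eventually_elim
    case (elim s)
    show ?case
      using elim(1) good(2) AE_LT_in_interval by eventually_elim (use elim eq in blast)
  qed
  moreover have "AE u in LT T. AE s in LT T. G s u = G1 s u"
    using cols good(2) AE_LT_in_interval
  proof eventually_elim
    case (elim u)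
    show ?case
      using elim(1) good(1) AE_LT_in_interval by eventually_elim (use elim eq in blast)
  qed
  moreover have "G1 s u \<noteq> 0 \<Longrightarrow> u < s" for s u
    by (simp add: G1_def truncated_kernel_def split: if_splits)
  ultimately show ?thesis
    using that row_bounded_truncated_kernel[OF T G0 S] unfolding G1_def by blast
qed

section \<open>Coercivity and invertibility of \<open>D\<^sub>t\<close>\<close>

lemma row_bounded_kernel_Volterra_indicator:
  assumes "T \<ge> 0"
  shows "row_bounded_kernel T (\<lambda>s u. c * (if u < s then 1 else 0)) (c\<^sup>2 * T)"
    and "row_bounded_kernel T (\<lambda>s u. c * (if s < u then 1 else 0)) (c\<^sup>2 * T)"
proof -
  have "(\<lambda>(s :: real, u :: real). c * (if u < s then 1 else 0)) \<in> borel_measurable borel"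
    and "(\<lambda>(s :: real, u :: real). c * (if s < u then 1 else 0)) \<in> borel_measurable borel"
    unfolding borel_prod[symmetric] by measurable
  from this[THEN row_bounded_kernel_if_bounded[OF assms, where B="\<bar>c\<bar>"]]
  show "row_bounded_kernel T (\<lambda>s u. c * (if u < s then 1 else 0)) (c\<^sup>2 * T)"
    and "row_bounded_kernel T (\<lambda>s u. c * (if s < u then 1 else 0)) (c\<^sup>2 * T)"
    by (simp_all add: abs_mult)
qed

lemma row_bounded_kernel_one_ker:
  assumes "T \<ge> 0"
  shows "row_bounded_kernel T (one_ker t) T" "row_bounded_kernel T (\<lambda>s u. one_ker t u s) T"
proof -
  have meas: "(\<lambda>(s, u). one_ker t s u) \<in> borel_measurable borel"
    unfolding one_ker_def borel_prod[symmetric] by measurable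
  have "\<bar>one_ker t s u\<bar> \<le> 1" for s u
    by (simp add: one_ker_def)
  then show "row_bounded_kernel T (one_ker t) T" "row_bounded_kernel T (\<lambda>s u. one_ker t u s) T"
    using row_bounded_kernel_if_bounded[OF assms meas, of 1]
      row_bounded_kernel_if_bounded[OF assms borel_measurable_kernel_transpose[OF meas], of 1]
    by simp_all
qed

lemma integral_mult_kop_Volterra_indicator_nonneg:
  assumes T: "T \<ge> 0" and k: "L2T T k"
  shows "0 \<le> (\<integral>s. k s * kop T (\<lambda>s u. if u < s then 1 else 0) k s \<partial>LT T)"
proof -
  define V where "V s u = (if u < s then 1 else 0 :: real)" for s u :: real
  have V: "row_bounded_kernel T V T" "row_bounded_kernel T (\<lambda>s u. V u s) T"
    using row_bounded_kernel_Volterra_indicator[OF T, of 1] by (simp_all add: V_def[abs_def])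
  have inner: "(\<integral>s. (V t s + V s t) * k s * k t \<partial>LT T) = (\<integral>s. k s \<partial>LT T) * k t" for t
  proof -
    have "AE s in LT T. (V t s + V s t) * k s * k t = k s * k t"
      using AE_LT_if_AE_lborel[OF AE_lborel_singleton[of t]] by eventually_elim (auto simp: V_def)
    then have "(\<integral>s. (V t s + V s t) * k s * k t \<partial>LT T) = (\<integral>s. k s * k t \<partial>LT T)"
      by (rule integral_LT_AE_cong[rotated]) (use L2T_integrable[OF T k] in simp)
    then show ?thesis
      by simp
  qed
  have "2 * (\<integral>s. k s * kop T V k s \<partial>LT T) = (\<integral>t. (\<integral>s. k s \<partial>LT T) * k t \<partial>LT T)"
    using integral_symmetrised_kernel[OF T V k] by (simp only: inner)
  also have "\<dots> = (\<integral>s. k s \<partial>LT T)\<^sup>2"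
    by (simp add: power2_eq_square)
  finally show ?thesis
    unfolding V_def using zero_le_power2[of "\<integral>s. k s \<partial>LT T"] by linarith
qed

lemma Gtilde_eq: "Gtilde \<rho> G = (\<lambda>s u. 2 * \<rho> * (if u < s then 1 else 0) + G s u)"
  by (simp add: Gtilde_def fun_eq_iff)

lemma double_integral_kernel_AE_cong:
  assumes T: "T \<ge> 0" and rows: "row_bounded_kernel T G S" and cols: "row_bounded_kernel T (\<lambda>s u. G u s) S"
    and AE_rows: "AE s in LT T. AE u in LT T. G' s u = G s u"
    and AE_cols: "AE u in LT T. AE s in LT T. G' s u = G s u"
    and k: "L2T T k"
  shows "(\<integral>t. (\<integral>s. (G' t s + G' s t) * k s * k t \<partial>LT T) \<partial>LT T)
       = (\<integral>t. (\<integral>s. (G t s + G s t) * k s * k t \<partial>LT T) \<partial>LT T)"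
proof -
  have inner: "(\<integral>s. (G t s + G s t) * k s * k t \<partial>LT T) = k t * kop T G k t + k t * kop T (\<lambda>s u. G u s) k t" for t
  proof -
    have "(\<integral>s. (G t s + G s t) * k s * k t \<partial>LT T) = (\<integral>s. k t * (G t s * k s) + k t * (G s t * k s) \<partial>LT T)"
      by (rule Bochner_Integration.integral_cong) (auto simp: algebra_simps)
    then show ?thesis
      using kop_integrable[OF rows k, of t] kop_integrable[OF cols k, of t] by (simp add: kop_def)
  qed
  have "AE t in LT T. (\<integral>s. (G' t s + G' s t) * k s * k t \<partial>LT T) = (\<integral>s. (G t s + G s t) * k s * k t \<partial>LT T)"
    using AE_rows AE_cols
  proof eventually_elim
    case (elim t)
    have "AE s in LT T. (G' t s + G' s t) * k s * k t = (G t s + G s t) * k s * k t"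
      using elim by eventually_elim simp
    moreover have "(\<lambda>s. (G t s + G s t) * k s * k t) = (\<lambda>s. k t * (G t s * k s) + k t * (G s t * k s))"
      by (simp add: fun_eq_iff algebra_simps)
    then have "integrable (LT T) (\<lambda>s. (G t s + G s t) * k s * k t)"
      using kop_integrable[OF rows k, of t] kop_integrable[OF cols k, of t] by simp
    ultimately show ?case
      by (intro integral_LT_AE_cong)
  qed
  moreover have "integrable (LT T) (\<lambda>t. (\<integral>s. (G t s + G s t) * k s * k t \<partial>LT T))"
    unfolding inner
    using L2T_integrable_mult[OF k kop_L2T(1)[OF T rows k]] L2T_integrable_mult[OF k kop_L2T(1)[OF T cols k]]
    by simp
  ultimately show ?thesis
    by (intro integral_LT_AE_cong)
qed

locale regular_Volterra_kernel =
  fixes T lam \<phi> \<rho> S :: real and G :: "real \<Rightarrow> real \<Rightarrow> real"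
  assumes T: "T \<ge> 0" and lam: "lam > 0" and phi: "\<phi> \<ge> 0" and rho: "\<rho> \<ge> 0"
    and rows: "row_bounded_kernel T G S" and cols: "row_bounded_kernel T (\<lambda>s u. G u s) S"
    and Volterra: "\<And>s u. G s u \<noteq> 0 \<Longrightarrow> u < s"
    and nonneg_definite: "\<And>k. L2T T k \<Longrightarrow> 0 \<le> (\<integral>t. (\<integral>s. (G t s + G s t) * k s * k t \<partial>LT T) \<partial>LT T)"
begin

lemma row_bounded_Gt_ker:
  "row_bounded_kernel T (Gt_ker \<rho> G t) (2 * ((2 * \<rho>)\<^sup>2 * T) + 2 * S)"
  "row_bounded_kernel T (\<lambda>s u. Gt_ker \<rho> G t u s) (2 * ((2 * \<rho>)\<^sup>2 * T) + 2 * S)"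
proof -
  have "(\<lambda>(s :: real, u). if t \<le> u then 1 else 0 :: real) \<in> borel_measurable borel"
    and "(\<lambda>(s :: real, u :: real). if t \<le> s then 1 else 0 :: real) \<in> borel_measurable borel"
    unfolding borel_prod[symmetric] by measurable
  note weighted = row_bounded_kernel_mult_weight[OF row_bounded_kernel_add[OF
        row_bounded_kernel_Volterra_indicator(1)[OF T, of "2 * \<rho>"] rows] this(1)]
    row_bounded_kernel_mult_weight[OF row_bounded_kernel_add[OF
        row_bounded_kernel_Volterra_indicator(2)[OF T, of "2 * \<rho>"] cols] this(2)]
  have "Gt_ker \<rho> G t = (\<lambda>s u. (2 * \<rho> * (if u < s then 1 else 0) + G s u) * (if t \<le> u then 1 else 0))"
    and "(\<lambda>s u. Gt_ker \<rho> G t u s) = (\<lambda>s u. (2 * \<rho> * (if s < u then 1 else 0) + G u s) * (if t \<le> s then 1 else 0))"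
    by (simp_all add: fun_eq_iff Gt_ker_def Gtilde_def)
  with weighted show "row_bounded_kernel T (Gt_ker \<rho> G t) (2 * ((2 * \<rho>)\<^sup>2 * T) + 2 * S)"
    "row_bounded_kernel T (\<lambda>s u. Gt_ker \<rho> G t u s) (2 * ((2 * \<rho>)\<^sup>2 * T) + 2 * S)"
    by simp_all
qed

lemma one_op_L2T: "L2T T h \<Longrightarrow> L2T T (one_op T t h)"
  and L2_norm_one_op_le: "L2T T h \<Longrightarrow> L2_norm T (one_op T t h) \<le> T * L2_norm T h"
  and one_adj_L2T: "L2T T h \<Longrightarrow> L2T T (one_adj T t h)"
  and L2_norm_one_adj_le: "L2T T h \<Longrightarrow> L2_norm T (one_adj T t h) \<le> T * L2_norm T h"
  using kop_L2T[OF T row_bounded_kernel_one_ker(1)[OF T]] kop_L2T[OF T row_bounded_kernel_one_ker(2)[OF T]] T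
  by (simp_all add: one_op_def one_adj_def real_sqrt_mult_self)

lemma D_op_L2T: "L2T T h \<Longrightarrow> L2T T (D_op T lam \<phi> \<rho> G t h)"
  unfolding D_op_def
  by (intro L2T_add L2T_cmult kop_L2T(1)[OF T row_bounded_Gt_ker(1)] kop_L2T(1)[OF T row_bounded_Gt_ker(2)]
      one_adj_L2T one_op_L2T)

lemma L2_norm_D_op_le:
  assumes h: "L2T T h"
  shows "L2_norm T (D_op T lam \<phi> \<rho> G t h)
    \<le> (2 * lam + 2 * sqrt (T * (2 * ((2 * \<rho>)\<^sup>2 * T) + 2 * S)) + 2 * \<phi> * T\<^sup>2) * L2_norm T h"
proof -
  define R where "R = 2 * ((2 * \<rho>)\<^sup>2 * T) + 2 * S"
  define a where "a = (\<lambda>s. 2 * lam * h s)"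
  define b where "b = kop T (Gt_ker \<rho> G t) h"
  define c where "c = kop T (\<lambda>s u. Gt_ker \<rho> G t u s) h"
  define d where "d = (\<lambda>s. 2 * \<phi> * one_adj T t (one_op T t h) s)"
  have L2: "L2T T a" "L2T T b" "L2T T c" "L2T T d"
    unfolding a_def b_def c_def d_def
    by (intro h L2T_cmult kop_L2T(1)[OF T row_bounded_Gt_ker(1)] kop_L2T(1)[OF T row_bounded_Gt_ker(2)]
        one_adj_L2T one_op_L2T)+
  have "L2_norm T (D_op T lam \<phi> \<rho> G t h) = L2_norm T (\<lambda>s. a s + b s + c s + d s)"
    by (simp add: D_op_def a_def b_def c_def d_def)
  also have "\<dots> \<le> L2_norm T a + L2_norm T b + L2_norm T c + L2_norm T d"
    using L2 L2_norm_triangle[of T "\<lambda>s. a s + b s + c s" d] L2_norm_triangle[of T "\<lambda>s. a s + b s" c]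
      L2_norm_triangle[of T a b] by (simp add: L2T_add)
  also have "\<dots> \<le> 2 * lam * L2_norm T h + sqrt (T * R) * L2_norm T h + sqrt (T * R) * L2_norm T h
      + 2 * \<phi> * (T * (T * L2_norm T h))"
  proof (intro add_mono)
    show "L2_norm T a \<le> 2 * lam * L2_norm T h"
      using lam by (simp add: a_def L2_norm_cmult)
    show "L2_norm T b \<le> sqrt (T * R) * L2_norm T h" "L2_norm T c \<le> sqrt (T * R) * L2_norm T h"
      unfolding b_def c_def R_def using kop_L2T(2)[OF T row_bounded_Gt_ker(1) h] kop_L2T(2)[OF T row_bounded_Gt_ker(2) h]
      by simp_all
    have "L2_norm T (one_adj T t (one_op T t h)) \<le> T * (T * L2_norm T h)"
      using L2_norm_one_adj_le[OF one_op_L2T[OF h]] L2_norm_one_op_le[OF h] T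
      by (meson mult_left_mono order_trans)
    then show "L2_norm T d \<le> 2 * \<phi> * (T * (T * L2_norm T h))"
      using phi by (simp add: d_def L2_norm_cmult mult_left_mono)
  qed
  finally show ?thesis
    by (simp add: R_def algebra_simps power2_eq_square)
qed

lemma D_op_linear:
  assumes f: "L2T T f" and g: "L2T T g"
  shows "D_op T lam \<phi> \<rho> G t (\<lambda>s. a * f s + b * g s)
    = (\<lambda>s. a * D_op T lam \<phi> \<rho> G t f s + b * D_op T lam \<phi> \<rho> G t g s)"
proof -
  have one_op: "one_op T t (\<lambda>u. a * f u + b * g u) = (\<lambda>s. a * one_op T t f s + b * one_op T t g s)"
    unfolding one_op_def using kop_linear[OF row_bounded_kernel_one_ker(1)[OF T] f g] by auto
  show ?thesis
  proof (rule ext)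
    fix s
    show "D_op T lam \<phi> \<rho> G t (\<lambda>s. a * f s + b * g s) s
        = a * D_op T lam \<phi> \<rho> G t f s + b * D_op T lam \<phi> \<rho> G t g s"
      unfolding D_op_def one_adj_def one_op
      using kop_linear[OF row_bounded_Gt_ker(1) f g] kop_linear[OF row_bounded_Gt_ker(2) f g]
        kop_linear[OF row_bounded_kernel_one_ker(2)[OF T] one_op_L2T[OF f] one_op_L2T[OF g]]
      by (simp add: algebra_simps)
  qed
qed

lemma integral_mult_kop_Gtilde_nonneg:
  assumes k: "L2T T k"
  shows "0 \<le> (\<integral>s. k s * kop T (Gtilde \<rho> G) k s \<partial>LT T)"
proof -
  define I where "I = (\<lambda>s u :: real. if u < s then 1 else 0 :: real)"
  have I: "row_bounded_kernel T I T"
    using row_bounded_kernel_Volterra_indicator(1)[OF T, of 1] by (simp add: I_def)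
  have "kop T (Gtilde \<rho> G) k s = 2 * \<rho> * kop T I k s + kop T G k s" for s
    using kop_add_kernel[OF row_bounded_kernel_Volterra_indicator(1)[OF T] rows k]
    by (simp add: Gtilde_eq kop_cmult_kernel I_def)
  then have "(\<integral>s. k s * kop T (Gtilde \<rho> G) k s \<partial>LT T)
      = (\<integral>s. 2 * \<rho> * (k s * kop T I k s) + k s * kop T G k s \<partial>LT T)"
    by (simp add: algebra_simps)
  also have "\<dots> = 2 * \<rho> * (\<integral>s. k s * kop T I k s \<partial>LT T) + (\<integral>s. k s * kop T G k s \<partial>LT T)"
    using L2T_integrable_mult[OF k kop_L2T(1)[OF T I k]] L2T_integrable_mult[OF k kop_L2T(1)[OF T rows k]]
    by simp
  finally have "(\<integral>s. k s * kop T (Gtilde \<rho> G) k s \<partial>LT T)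
      = 2 * \<rho> * (\<integral>s. k s * kop T I k s \<partial>LT T) + (\<integral>s. k s * kop T G k s \<partial>LT T)" .
  moreover have "0 \<le> (\<integral>s. k s * kop T I k s \<partial>LT T)"
    unfolding I_def by (rule integral_mult_kop_Volterra_indicator_nonneg[OF T k])
  moreover have "0 \<le> (\<integral>s. k s * kop T G k s \<partial>LT T)"
    using nonneg_definite[OF k] integral_symmetrised_kernel[OF T rows cols k] by simp
  ultimately show ?thesis
    using rho by simp
qed

text \<open>The truncation at \<open>t\<close> is harmless: since \<open>Gtilde\<close> is a Volterra kernel, the rows
  \<open>s < t\<close> of \<open>Gt_ker\<close> vanish, so the quadratic form of \<open>Gt_ker\<close> at \<open>h\<close> is that of
  \<open>Gtilde\<close> at \<open>h\<close> cut off below \<open>t\<close>.\<close>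

lemma integral_mult_kop_Gt_ker_nonneg:
  assumes h: "L2T T h"
  shows "0 \<le> (\<integral>s. h s * kop T (Gt_ker \<rho> G t) h s \<partial>LT T)"
proof -
  define k where "k = (\<lambda>u. h u * (if t \<le> u then 1 else 0))"
  have k: "L2T T k"
    unfolding k_def by (rule L2T_mult_indicator[OF h])
  have pw: "h s * kop T (Gt_ker \<rho> G t) h s = k s * kop T (Gtilde \<rho> G) k s" for s
  proof (cases "t \<le> s")
    case True
    then show ?thesis
      by (simp add: k_def kop_def Gt_ker_def mult_ac)
  next
    case False
    then have "G s u = 0" if "t \<le> u" for u
      using Volterra[of s u] that by force
    with False have "Gt_ker \<rho> G t s u = 0" for u
      by (auto simp: Gt_ker_def Gtilde_def)
    with False show ?thesis
      by (simp add: k_def kop_def)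
  qed
  show ?thesis
    unfolding pw by (rule integral_mult_kop_Gtilde_nonneg[OF k])
qed

lemma D_op_coercive:
  assumes h: "L2T T h"
  shows "2 * lam * (L2_norm T h)\<^sup>2 \<le> (\<integral>s. h s * D_op T lam \<phi> \<rho> G t h s \<partial>LT T)"
proof -
  define w where "w = one_op T t h"
  have w: "L2T T w"
    unfolding w_def by (rule one_op_L2T[OF h])
  have b: "L2T T (kop T (Gt_ker \<rho> G t) h)" and c: "L2T T (kop T (\<lambda>s u. Gt_ker \<rho> G t u s) h)"
    by (intro kop_L2T(1)[OF T row_bounded_Gt_ker(1) h] kop_L2T(1)[OF T row_bounded_Gt_ker(2) h])+
  have "(\<integral>s. h s * D_op T lam \<phi> \<rho> G t h s \<partial>LT T)
      = (\<integral>s. 2 * lam * (h s)\<^sup>2 + h s * kop T (Gt_ker \<rho> G t) h s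
          + h s * kop T (\<lambda>s u. Gt_ker \<rho> G t u s) h s + 2 * \<phi> * (h s * one_adj T t w s) \<partial>LT T)"
    unfolding D_op_def w_def by (rule Bochner_Integration.integral_cong) (auto simp: algebra_simps power2_eq_square)
  also have "\<dots> = 2 * lam * (L2_norm T h)\<^sup>2 + (\<integral>s. h s * kop T (Gt_ker \<rho> G t) h s \<partial>LT T)
      + (\<integral>s. h s * kop T (\<lambda>s u. Gt_ker \<rho> G t u s) h s \<partial>LT T) + 2 * \<phi> * (\<integral>s. h s * one_adj T t w s \<partial>LT T)"
    using L2T_integrable_power2[OF h] L2T_integrable_mult[OF h b] L2T_integrable_mult[OF h c]
      L2T_integrable_mult[OF h one_adj_L2T[OF w]]
    by (simp add: power2_L2_norm)
  also have "(\<integral>s. h s * kop T (\<lambda>s u. Gt_ker \<rho> G t u s) h s \<partial>LT T) = (\<integral>s. h s * kop T (Gt_ker \<rho> G t) h s \<partial>LT T)"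
    by (rule integral_mult_kop_transpose[OF T row_bounded_Gt_ker(2) h h])
  also have "(\<integral>s. h s * one_adj T t w s \<partial>LT T) = (\<integral>s. (w s)\<^sup>2 \<partial>LT T)"
    using integral_mult_kop_transpose[OF T row_bounded_kernel_one_ker(2)[OF T] h w]
    by (simp add: one_adj_def one_op_def w_def power2_eq_square)
  finally show ?thesis
    using integral_mult_kop_Gt_ker_nonneg[OF h] phi by simp
qed

lemma D_op_AE_cong:
  assumes AE_rows: "AE s in LT T. AE u in LT T. G' s u = G s u"
    and AE_cols: "AE u in LT T. AE s in LT T. G' s u = G s u"
    and h: "L2T T h"
  shows "AE s in LT T. D_op T lam \<phi> \<rho> G' t h s = D_op T lam \<phi> \<rho> G t h s"
proof -
  have "AE s in LT T. kop T (Gt_ker \<rho> G' t) h s = kop T (Gt_ker \<rho> G t) h s"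
    using AE_rows
  proof eventually_elim
    case (elim s)
    have "AE u in LT T. Gt_ker \<rho> G' t s u * h u = Gt_ker \<rho> G t s u * h u"
      using elim by eventually_elim (simp add: Gt_ker_def Gtilde_def)
    then show ?case
      unfolding kop_def by (rule integral_LT_AE_cong[OF kop_integrable[OF row_bounded_Gt_ker(1) h]])
  qed
  moreover have "AE s in LT T. kop T (\<lambda>s u. Gt_ker \<rho> G' t u s) h s = kop T (\<lambda>s u. Gt_ker \<rho> G t u s) h s"
    using AE_cols
  proof eventually_elim
    case (elim s)
    have "AE u in LT T. Gt_ker \<rho> G' t u s * h u = Gt_ker \<rho> G t u s * h u"
      using elim by eventually_elim (simp add: Gt_ker_def Gtilde_def)
    then show ?case
      unfolding kop_def by (rule integral_LT_AE_cong[OF kop_integrable[OF row_bounded_Gt_ker(2) h]])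
  qed
  ultimately show ?thesis
    by eventually_elim (simp add: D_op_def)
qed

text \<open>\<open>D_inv\<close> picks an arbitrary solution; coercivity bounds every solution, whichever is chosen.\<close>

lemma D_inv_bound:
  assumes AE_rows: "AE s in LT T. AE u in LT T. G' s u = G s u"
    and AE_cols: "AE u in LT T. AE s in LT T. G' s u = G s u"
    and f: "L2T T f"
  shows "L2T T (D_inv T lam \<phi> \<rho> G' t f)"
    and "L2_norm T (D_inv T lam \<phi> \<rho> G' t f) \<le> L2_norm T f / (2 * lam)"
proof -
  have lam2: "0 < 2 * lam"
    using lam by simp
  obtain g where g: "L2T T g" "AE s in LT T. D_op T lam \<phi> \<rho> G t g s = f s"
    using coercive_operator_solvable[OF D_op_L2T[where t=t] L2_norm_D_op_le[where t=t] D_op_coercive[where t=t]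
        lam2 D_op_linear[where t=t] f] by blast
  have "AE s in LT T. D_op T lam \<phi> \<rho> G' t g s = f s"
    using D_op_AE_cong[OF AE_rows AE_cols g(1), where t=t] g(2) by eventually_elim simp
  with g(1) have "\<exists>g. L2T T g \<and> (AE s in LT T. D_op T lam \<phi> \<rho> G' t g s = f s)"
    by blast
  then have "L2T T (D_inv T lam \<phi> \<rho> G' t f)
      \<and> (AE s in LT T. D_op T lam \<phi> \<rho> G' t (D_inv T lam \<phi> \<rho> G' t f) s = f s)"
    unfolding D_inv_def by (rule someI_ex)
  then have g': "L2T T (D_inv T lam \<phi> \<rho> G' t f)"
    and solution: "AE s in LT T. D_op T lam \<phi> \<rho> G' t (D_inv T lam \<phi> \<rho> G' t f) s = f s"
    by blast+
  then show "L2T T (D_inv T lam \<phi> \<rho> G' t f)"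
    by blast
  from D_op_AE_cong[OF AE_rows AE_cols g', where t=t] solution
  have "AE s in LT T. D_inv T lam \<phi> \<rho> G' t f s * D_op T lam \<phi> \<rho> G t (D_inv T lam \<phi> \<rho> G' t f) s
      = D_inv T lam \<phi> \<rho> G' t f s * f s"
    by eventually_elim simp
  then have "(\<integral>s. D_inv T lam \<phi> \<rho> G' t f s * D_op T lam \<phi> \<rho> G t (D_inv T lam \<phi> \<rho> G' t f) s \<partial>LT T)
      = (\<integral>s. D_inv T lam \<phi> \<rho> G' t f s * f s \<partial>LT T)"
    by (rule integral_LT_AE_cong[OF L2T_integrable_mult[OF g' f]])
  with D_op_coercive[OF g', where t=t]
  have "2 * lam * (L2_norm T (D_inv T lam \<phi> \<rho> G' t f))\<^sup>2 \<le> (\<integral>s. D_inv T lam \<phi> \<rho> G' t f s * f s \<partial>LT T)"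
    by simp
  then show "L2_norm T (D_inv T lam \<phi> \<rho> G' t f) \<le> L2_norm T f / (2 * lam)"
    by (rule L2_norm_le_if_coercive[OF g' f lam2])
qed

lemma L2_norm_linear_combination3_le:
  assumes "L2T T g1" "L2T T g2" "L2T T g3"
  shows "L2_norm T (\<lambda>s. c1 * g1 s + (c2 * g2 s + c3 * g3 s))
    \<le> \<bar>c1\<bar> * L2_norm T g1 + (\<bar>c2\<bar> * L2_norm T g2 + \<bar>c3\<bar> * L2_norm T g3)"
proof -
  have "L2_norm T (\<lambda>s. c1 * g1 s + (c2 * g2 s + c3 * g3 s))
      \<le> L2_norm T (\<lambda>s. c1 * g1 s) + L2_norm T (\<lambda>s. c2 * g2 s + c3 * g3 s)"
    using assms by (intro L2_norm_triangle L2T_add L2T_cmult)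
  also have "\<dots> \<le> L2_norm T (\<lambda>s. c1 * g1 s) + (L2_norm T (\<lambda>s. c2 * g2 s) + L2_norm T (\<lambda>s. c3 * g3 s))"
    using assms by (intro add_left_mono L2_norm_triangle L2T_cmult)
  finally show ?thesis
    by (simp add: L2_norm_cmult)
qed

lemma L2_norm_D_inv_le_unit:
  assumes AE_rows: "AE s in LT T. AE u in LT T. G' s u = G s u"
    and AE_cols: "AE u in LT T. AE s in LT T. G' s u = G s u"
    and f: "L2T T f" "L2_norm T f \<le> 1"
  shows "L2T T (D_inv T lam \<phi> \<rho> G' t f)" "L2_norm T (D_inv T lam \<phi> \<rho> G' t f) \<le> 1 / (2 * lam)"
    and "L2T T (D_inv T lam \<phi> \<rho> G' t (one_adj T t f))"
    and "L2_norm T (D_inv T lam \<phi> \<rho> G' t (one_adj T t f)) \<le> T / (2 * lam)"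
proof -
  note bound = D_inv_bound[OF AE_rows AE_cols f(1), where t=t]
  note bound_adj = D_inv_bound[OF AE_rows AE_cols one_adj_L2T[OF f(1), where t=t], where t=t]
  show "L2T T (D_inv T lam \<phi> \<rho> G' t f)" "L2T T (D_inv T lam \<phi> \<rho> G' t (one_adj T t f))"
    using bound(1) bound_adj(1) .
  show "L2_norm T (D_inv T lam \<phi> \<rho> G' t f) \<le> 1 / (2 * lam)"
    using bound(2) divide_right_mono[OF f(2), of "2 * lam"] lam by linarith
  have "L2_norm T (one_adj T t f) \<le> T"
    using L2_norm_one_adj_le[OF f(1), of t] mult_left_le[OF f(2) T] by linarith
  then show "L2_norm T (D_inv T lam \<phi> \<rho> G' t (one_adj T t f)) \<le> T / (2 * lam)"
    using bound_adj(2) divide_right_mono[of _ T "2 * lam"] lam by force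
qed

lemma L2norm2_Gamma_inv_le:
  assumes AE_rows: "AE s in LT T. AE u in LT T. G' s u = G s u"
    and AE_cols: "AE u in LT T. AE s in LT T. G' s u = G s u"
    and f1: "L2T T f1" and f2: "L2T T f2" and unit: "L2norm2 T (f1, f2) \<le> 1"
  shows "L2norm2 T (Gamma_inv T lam \<phi> \<rho> G' t (f1, f2)) \<le> (1 + 2 * \<phi> * T)\<^sup>2 / (2 * lam) + 2 * \<phi>"
proof -
  define A1 where "A1 = D_inv T lam \<phi> \<rho> G' t f1"
  define A2 where "A2 = D_inv T lam \<phi> \<rho> G' t (one_adj T t f2)"
  have n1: "L2_norm T f1 \<le> 1" and n2: "L2_norm T f2 \<le> 1"
    using order_trans[OF L2_norm_le_L2norm2(1) unit] order_trans[OF L2_norm_le_L2norm2(2) unit] by simp_all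
  note A1 = L2_norm_D_inv_le_unit(1,2)[OF AE_rows AE_cols f1 n1, of t, folded A1_def]
  note A2 = L2_norm_D_inv_le_unit(3,4)[OF AE_rows AE_cols f2 n2, of t, folded A2_def]
  have one_A1: "L2_norm T (one_op T t A1) \<le> T / (2 * lam)"
    using L2_norm_one_op_le[OF A1(1), of t] mult_left_mono[OF A1(2) T] by simp
  have one_A2: "L2_norm T (one_op T t A2) \<le> T * T / (2 * lam)"
    using L2_norm_one_op_le[OF A2(1), of t] mult_left_mono[OF A2(2) T] by simp
  have "L2_norm T (\<lambda>s. A1 s - 2 * \<phi> * A2 s) \<le> L2_norm T A1 + 2 * \<phi> * L2_norm T A2"
    using L2_norm_diff_le[OF A1(1) L2T_cmult[OF A2(1)], of "2 * \<phi>"] phi by (simp add: L2_norm_cmult)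
  also have "\<dots> \<le> 1 / (2 * lam) + 2 * \<phi> * (T / (2 * lam))"
    using A1(2) A2(2) phi by (intro add_mono mult_left_mono) auto
  finally have fst_le: "L2_norm T (\<lambda>s. A1 s - 2 * \<phi> * A2 s) \<le> (1 + 2 * \<phi> * T) / (2 * lam)"
    by (simp add: add_divide_distrib)
  have "L2_norm T (\<lambda>s. - 2 * \<phi> * one_op T t A1 s + (- 2 * \<phi> * f2 s + 4 * \<phi>\<^sup>2 * one_op T t A2 s))
      \<le> \<bar>- 2 * \<phi>\<bar> * L2_norm T (one_op T t A1)
        + (\<bar>- 2 * \<phi>\<bar> * L2_norm T f2 + \<bar>4 * \<phi>\<^sup>2\<bar> * L2_norm T (one_op T t A2))"
    by (rule L2_norm_linear_combination3_le[OF one_op_L2T[OF A1(1)] f2 one_op_L2T[OF A2(1)]])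
  also have "\<dots> = 2 * \<phi> * L2_norm T (one_op T t A1) + (2 * \<phi> * L2_norm T f2 + 4 * \<phi>\<^sup>2 * L2_norm T (one_op T t A2))"
    using phi by simp
  also have "\<dots> \<le> 2 * \<phi> * (T / (2 * lam)) + (2 * \<phi> * 1 + 4 * \<phi>\<^sup>2 * (T * T / (2 * lam)))"
    using one_A1 one_A2 n2 phi by (intro add_mono mult_left_mono) auto
  finally have snd_le: "L2_norm T (\<lambda>s. - 2 * \<phi> * one_op T t A1 s + (- 2 * \<phi> * f2 s + 4 * \<phi>\<^sup>2 * one_op T t A2 s))
      \<le> 2 * \<phi> * T * (1 + 2 * \<phi> * T) / (2 * lam) + 2 * \<phi>"
    using lam by (simp add: field_simps power2_eq_square)
  have Gamma_eq: "Gamma_inv T lam \<phi> \<rho> G' t (f1, f2) = (\<lambda>s. A1 s - 2 * \<phi> * A2 s,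
      \<lambda>s. - 2 * \<phi> * one_op T t A1 s + (- 2 * \<phi> * f2 s + 4 * \<phi>\<^sup>2 * one_op T t A2 s))"
    by (simp add: Gamma_inv_def A1_def A2_def Let_def)
  have "L2norm2 T (Gamma_inv T lam \<phi> \<rho> G' t (f1, f2))
      \<le> (1 + 2 * \<phi> * T) / (2 * lam) + (2 * \<phi> * T * (1 + 2 * \<phi> * T) / (2 * lam) + 2 * \<phi>)"
    unfolding Gamma_eq by (rule order_trans[OF L2norm2_le_add add_mono[OF fst_le snd_le]])
  also have "\<dots> = (1 + 2 * \<phi> * T)\<^sup>2 / (2 * lam) + 2 * \<phi>"
    using lam by (simp add: field_simps power2_eq_square)
  finally show ?thesis .
qed

end

theorem lemma7p3:
  fixes T lam \<phi> \<rho> :: real and G :: "real \<Rightarrow> real \<Rightarrow> real"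
  assumes "T > 0" and "lam > 0" and "\<phi> \<ge> 0" and "\<rho> \<ge> 0"
    and "kernel_class T G"
  shows "(SUP t\<in>{0..T}. op_norm2 T (Gamma_inv T lam \<phi> \<rho> G t)) < \<infinity>"
proof -
  have T: "T \<ge> 0"
    using assms(1) by simp
  obtain G1 S where rows: "row_bounded_kernel T G1 S" and cols: "row_bounded_kernel T (\<lambda>s u. G1 u s) S"
    and Volterra: "\<And>s u. G1 s u \<noteq> 0 \<Longrightarrow> u < s"
    and AE_rows: "AE s in LT T. AE u in LT T. G s u = G1 s u"
    and AE_cols: "AE u in LT T. AE s in LT T. G s u = G1 s u"
    using kernel_class_borel_version[OF T assms(5)] by blast
  have nonneg_G: "0 \<le> (\<integral>t. (\<integral>s. (G t s + G s t) * k s * k t \<partial>LT T) \<partial>LT T)" if "L2T T k" for k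
    using assms(5) that unfolding kernel_class_def by blast
  have "0 \<le> (\<integral>t. (\<integral>s. (G1 t s + G1 s t) * k s * k t \<partial>LT T) \<partial>LT T)" if "L2T T k" for k
    using nonneg_G[OF that] double_integral_kernel_AE_cong[OF T rows cols AE_rows AE_cols that] by simp
  then interpret regular_Volterra_kernel T lam \<phi> \<rho> S G1
    using T assms(2-4) rows cols Volterra by unfold_locales
  have "op_norm2 T (Gamma_inv T lam \<phi> \<rho> G t) \<le> ennreal ((1 + 2 * \<phi> * T)\<^sup>2 / (2 * lam) + 2 * \<phi>)" for t
    unfolding op_norm2_def
    using L2norm2_Gamma_inv_le[OF AE_rows AE_cols] by (intro SUP_least ennreal_leI) auto
  then have "(SUP t\<in>{0..T}. op_norm2 T (Gamma_inv T lam \<phi> \<rho> G t)) \<le> ennreal ((1 + 2 * \<phi> * T)\<^sup>2 / (2 * lam) + 2 * \<phi>)"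
    by (rule SUP_least)
  then show ?thesis
    by (simp add: order_le_less_trans)
qed

end
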